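(* Let $(J_n)_{n\ge1}$ be pairwise disjoint intervals in $\mathcal{R}$ with $\lim_{n\to\infty}l(J_n)=0$. Then $\bigcup_{n=1}^\infty J_n$ is L-measurable and $M\big(\bigcup_{n=1}^\infty J_n\big)=\sum_{n=1}^\infty l(J_n)$.
   Context: $\mathcal{R}$ denotes the Levi-Civita field: functions $x:\mathbb{Q}\to\mathbb{R}$ with left-finite support, with componentwise addition and formal power series multiplication, ordered by $x>0$ iff $x\ne0$ and $x[\min\operatorname{supp}x]>0$; it is a non-Archimedean ordered field extension of $\mathbb{R}$, Cauchy complete in the order topology, in which all limits and series are taken (a series $\sum a_n$ converges iff $a_n\to0$). An interval is a set $[a,b],[a,b),(a,b]$ or $(a,b)$ with $a<b$ in $\mathcal{R}$, of length $l=b-a$. A cover of $A\subseteq\mathcal{R}$ is a sequence of intervals $(S_n)_{n\ge1}$ with $A\subseteq\bigcup_n S_n$ and $\sum_n l(S_n)$ convergent in $\mathcal{R}$. $A$ is called outer measurable if the infimum $\inf\{\sum_n l(S_n): (S_n)\text{ a cover of }A\}$ exists in $\mathcal{R}$; this infimum is then called the outer measure $M_u(A)$. An outer measurable set $A\subseteq\mathcal{R}$ is L-measurable if for every outer measurable $B\subseteq\mathcal{R}$ both $A\cap B$ and $A^c\cap B$ (where $A^c=\mathcal{R}\setminus A$) are outer measurable and $M_u(B)=M_u(A\cap B)+M_u(A^c\cap B)$; then its L-measure is $M(A):=M_u(A)$. *)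

theory Defs
  imports Complex_Main "HOL-Library.Function_Algebras"
begin

text \<open>The Levi-Civita field, represented by its carrier inside the type rat => real.
  Elements are functions with left-finite support; addition, subtraction and 0 are the
  pointwise (componentwise) operations on functions. Multiplication is not needed for
  the statement below and therefore not defined.\<close>

definition LC :: "(rat \<Rightarrow> real) set" where
  "LC = {x. \<forall>q. finite {a. a < q \<and> x a \<noteq> 0}}"

definition lc_pos :: "(rat \<Rightarrow> real) \<Rightarrow> bool" where
  "lc_pos x \<longleftrightarrow> x \<noteq> 0 \<and> (\<exists>q. x q > 0 \<and> (\<forall>p<q. x p = 0))"

definition lc_less :: "(rat \<Rightarrow> real) \<Rightarrow> (rat \<Rightarrow> real) \<Rightarrow> bool" where
  "lc_less x y \<longleftrightarrow> lc_pos (y - x)"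

definition lc_le :: "(rat \<Rightarrow> real) \<Rightarrow> (rat \<Rightarrow> real) \<Rightarrow> bool" where
  "lc_le x y \<longleftrightarrow> x = y \<or> lc_less x y"

definition lc_abs :: "(rat \<Rightarrow> real) \<Rightarrow> rat \<Rightarrow> real" where
  "lc_abs x = (if lc_pos (- x) then - x else x)"

definition lc_tendsto :: "(nat \<Rightarrow> rat \<Rightarrow> real) \<Rightarrow> (rat \<Rightarrow> real) \<Rightarrow> bool" where
  "lc_tendsto s L \<longleftrightarrow> L \<in> LC \<and>
     (\<forall>e\<in>LC. lc_pos e \<longrightarrow> (\<exists>N. \<forall>n\<ge>N. lc_less (lc_abs (s n - L)) e))"

definition lc_sums :: "(nat \<Rightarrow> rat \<Rightarrow> real) \<Rightarrow> (rat \<Rightarrow> real) \<Rightarrow> bool" where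
  "lc_sums a S \<longleftrightarrow> lc_tendsto (\<lambda>n. \<Sum>i<n. a i) S"

definition lc_summable :: "(nat \<Rightarrow> rat \<Rightarrow> real) \<Rightarrow> bool" where
  "lc_summable a \<longleftrightarrow> (\<exists>S. lc_sums a S)"

definition lc_suminf :: "(nat \<Rightarrow> rat \<Rightarrow> real) \<Rightarrow> rat \<Rightarrow> real" where
  "lc_suminf a = (THE S. lc_sums a S)"

definition lc_interval :: "(rat \<Rightarrow> real) \<Rightarrow> (rat \<Rightarrow> real) \<Rightarrow> (rat \<Rightarrow> real) set \<Rightarrow> bool" where
  "lc_interval a b S \<longleftrightarrow> a \<in> LC \<and> b \<in> LC \<and> lc_less a b \<and>
     (S = {x\<in>LC. lc_le a x \<and> lc_le x b} \<or> S = {x\<in>LC. lc_le a x \<and> lc_less x b} \<or>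
      S = {x\<in>LC. lc_less a x \<and> lc_le x b} \<or> S = {x\<in>LC. lc_less a x \<and> lc_less x b})"

definition is_lc_interval :: "(rat \<Rightarrow> real) set \<Rightarrow> bool" where
  "is_lc_interval S \<longleftrightarrow> (\<exists>a b. lc_interval a b S)"

definition lc_length :: "(rat \<Rightarrow> real) set \<Rightarrow> rat \<Rightarrow> real" where
  "lc_length S = (THE d. \<exists>a b. lc_interval a b S \<and> d = b - a)"

definition lc_cover :: "(rat \<Rightarrow> real) set \<Rightarrow> (nat \<Rightarrow> (rat \<Rightarrow> real) set) \<Rightarrow> bool" where
  "lc_cover A S \<longleftrightarrow> (\<forall>n. is_lc_interval (S n)) \<and> A \<subseteq> (\<Union>n. S n) \<and>
     lc_summable (\<lambda>n. lc_length (S n))"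

definition cover_sums :: "(rat \<Rightarrow> real) set \<Rightarrow> (rat \<Rightarrow> real) set" where
  "cover_sums A = {s. \<exists>S. lc_cover A S \<and> s = lc_suminf (\<lambda>n. lc_length (S n))}"

definition lc_is_inf :: "(rat \<Rightarrow> real) set \<Rightarrow> (rat \<Rightarrow> real) \<Rightarrow> bool" where
  "lc_is_inf X m \<longleftrightarrow> m \<in> LC \<and> (\<forall>x\<in>X. lc_le m x) \<and>
     (\<forall>m'\<in>LC. (\<forall>x\<in>X. lc_le m' x) \<longrightarrow> lc_le m' m)"

definition outer_measurable :: "(rat \<Rightarrow> real) set \<Rightarrow> bool" where
  "outer_measurable A \<longleftrightarrow> A \<subseteq> LC \<and> (\<exists>m. lc_is_inf (cover_sums A) m)"

definition outer_measure :: "(rat \<Rightarrow> real) set \<Rightarrow> rat \<Rightarrow> real" where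
  "outer_measure A = (THE m. lc_is_inf (cover_sums A) m)"

definition L_measurable :: "(rat \<Rightarrow> real) set \<Rightarrow> bool" where
  "L_measurable A \<longleftrightarrow> outer_measurable A \<and>
     (\<forall>B. outer_measurable B \<longrightarrow>
        outer_measurable (A \<inter> B) \<and> outer_measurable ((LC - A) \<inter> B) \<and>
        outer_measure B = outer_measure (A \<inter> B) + outer_measure ((LC - A) \<inter> B))"

definition L_measure :: "(rat \<Rightarrow> real) set \<Rightarrow> rat \<Rightarrow> real" where
  "L_measure A = outer_measure A"

end

theory Submission
  imports Defs "HOL-Analysis.Continuum_Not_Denumerable" "HOL-Library.Nat_Bijection"
    "HOL-Library.More_List"
begin

text \<open>
  An element vanishes
  up to \<open>q\<close> when all its coefficients at exponents \<open>\<le> q\<close> are zero, i.e. it is infinitely small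
  compared to \<open>\<epsilon>\<^sup>q\<close>. Order convergence means vanishing up to every \<open>q\<close> eventually, so a series
  converges iff its terms tend to \<open>0\<close>, and its sum is computed coefficientwise.

  Let \<open>J\<^sub>n\<close> have endpoints \<open>a\<^sub>n < b\<^sub>n\<close>. Heine-Borel fails in the Levi-Civita field, but countably many
  intervals whose lengths vanish up to \<open>q\<close> still cannot cover an interval of length \<open>\<ge> r \<epsilon>\<^sup>q\<close>
  (\<open>r > 0\<close> real): it contains the uncountably many points \<open>u + s \<epsilon>\<^sup>q\<close>, and each small interval
  contains at most one of them. Therefore every cover of \<open>\<Union>\<^sub>n J\<^sub>n\<close> is at least as long as each
  partial sum of the \<open>b\<^sub>n - a\<^sub>n\<close>, and the outer measure of the union is \<open>\<Sum>\<^sub>n (b\<^sub>n - a\<^sub>n)\<close>.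

  For Caratheodory's condition, fix a cover of \<open>B\<close> and \<open>q\<close>; only finitely many \<open>J\<^sub>n\<close> have length
  not vanishing up to \<open>q\<close>. Intersecting the cover with the \<open>J\<^sub>n\<close>, and with the gaps left by these
  finitely many \<open>J\<^sub>n\<close>, and fattening every piece by slack vanishing up to \<open>q\<close>, gives covers of
  \<open>A \<inter> B\<close> and \<open>B - A\<close> of total length at most that of the given cover up to an error vanishing up
  to \<open>q\<close>. By Cauchy completeness of \<open>lc\<close> the two infima then exist and add up to the infimum
  for \<open>B\<close>.
\<close>

section \<open>The ordered group of the Levi-Civita field\<close>

lemma LC_zero: "0 \<in> LC"
  by (simp add: LC_def)

lemma LC_add:
  assumes "x \<in> LC" "y \<in> LC"
  shows "x + y \<in> LC"
proof -
  have "finite {a. a < q \<and> (x + y) a \<noteq> 0}" for q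
    by (rule finite_subset[of _ "{a. a < q \<and> x a \<noteq> 0} \<union> {a. a < q \<and> y a \<noteq> 0}"])
      (use assms in \<open>auto simp: LC_def\<close>)
  thus ?thesis by (simp add: LC_def)
qed

lemma LC_uminus: "x \<in> LC \<Longrightarrow> - x \<in> LC"
  by (simp add: LC_def)

lemma LC_diff: "x \<in> LC \<Longrightarrow> y \<in> LC \<Longrightarrow> x - y \<in> LC"
  using LC_add LC_uminus by fastforce

lemma LC_least_support:
  assumes "x \<in> LC" "x \<noteq> 0"
  obtains p0 where "x p0 \<noteq> 0" "\<And>p. p < p0 \<Longrightarrow> x p = 0"
proof -
  obtain q0 where q0: "x q0 \<noteq> 0" using assms(2) by (auto simp: fun_eq_iff)
  define F where "F = {a. a < q0 + 1 \<and> x a \<noteq> 0}"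
  have fin: "finite F" using assms(1) by (simp add: LC_def F_def)
  have "q0 \<in> F" using q0 by (simp add: F_def)
  show ?thesis
  proof
    have "Min F \<in> F" using Min_in[OF fin] \<open>q0 \<in> F\<close> by blast
    thus "x (Min F) \<noteq> 0" by (simp add: F_def)
    fix p assume "p < Min F"
    moreover have "p \<in> F \<Longrightarrow> Min F \<le> p" using fin by simp
    moreover have "Min F \<le> q0" using Min_le[OF fin \<open>q0 \<in> F\<close>] .
    ultimately show "x p = 0" by (force simp: F_def)
  qed
qed

lemma lc_pos_add:
  assumes "lc_pos x" "lc_pos y"
  shows "lc_pos (x + y)"
proof -
  obtain q where q: "x q > 0" "\<forall>p<q. x p = 0" using assms(1) by (auto simp: lc_pos_def)
  obtain r where r: "y r > 0" "\<forall>p<r. y p = 0" using assms(2) by (auto simp: lc_pos_def)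
  have "(x + y) (min q r) > 0"
    using q r by (cases q r rule: linorder_cases) (auto simp: min_def)
  moreover have "\<forall>p<min q r. (x + y) p = 0" using q r by simp
  ultimately show ?thesis unfolding lc_pos_def by (metis less_irrefl zero_fun_apply)
qed

lemma lc_pos_not_both: "\<not> (lc_pos x \<and> lc_pos (- x))"
proof
  assume "lc_pos x \<and> lc_pos (- x)"
  then obtain q r where "x q > 0" "\<forall>p<q. x p = 0" "- x r > 0" "\<forall>p<r. - x p = 0"
    by (auto simp: lc_pos_def)
  thus False by (cases q r rule: linorder_cases) force+
qed

lemma lc_pos_total:
  assumes "x \<in> LC" "x \<noteq> 0"
  shows "lc_pos x \<or> lc_pos (- x)"
proof -
  obtain p0 where "x p0 \<noteq> 0" "\<And>p. p < p0 \<Longrightarrow> x p = 0"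
    using LC_least_support[OF assms] by blast
  moreover have "- x \<noteq> 0" using assms(2) by (simp add: fun_eq_iff)
  ultimately show ?thesis using assms(2) unfolding lc_pos_def
    by (cases "x p0 > 0") (auto intro!: exI[of _ p0])
qed

typedef lc = LC
  using LC_zero by blast

setup_lifting type_definition_lc

instantiation lc :: ab_group_add
begin

lift_definition zero_lc :: lc is 0 by (rule LC_zero)
lift_definition plus_lc :: "lc \<Rightarrow> lc \<Rightarrow> lc" is "(+)" by (rule LC_add)
lift_definition minus_lc :: "lc \<Rightarrow> lc \<Rightarrow> lc" is "(-)" by (rule LC_diff)
lift_definition uminus_lc :: "lc \<Rightarrow> lc" is uminus by (rule LC_uminus)

instance
  by standard (transfer; simp add: algebra_simps)+

end

instantiation lc :: linordered_ab_group_add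
begin

definition less_lc :: "lc \<Rightarrow> lc \<Rightarrow> bool" where
  "x < y \<longleftrightarrow> lc_pos (Rep_lc y - Rep_lc x)"

definition less_eq_lc :: "lc \<Rightarrow> lc \<Rightarrow> bool" where
  "x \<le> y \<longleftrightarrow> x = y \<or> lc_pos (Rep_lc y - Rep_lc x)"

instance
proof
  fix x y z :: lc
  have pos_nz: "lc_pos u \<Longrightarrow> u \<noteq> 0" for u by (simp add: lc_pos_def)
  have eq_iff: "x = y \<longleftrightarrow> Rep_lc y - Rep_lc x = 0" by (metis Rep_lc_inject eq_iff_diff_eq_0)
  have not_both: "\<not> (lc_pos (Rep_lc y - Rep_lc x) \<and> lc_pos (Rep_lc x - Rep_lc y))"
    using lc_pos_not_both[of "Rep_lc y - Rep_lc x"] by simp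
  show "x < y \<longleftrightarrow> x \<le> y \<and> \<not> y \<le> x"
    unfolding less_lc_def less_eq_lc_def using pos_nz eq_iff not_both by blast
  show "x \<le> x" by (simp add: less_eq_lc_def)
  show "x \<le> z" if "x \<le> y" "y \<le> z"
    using that lc_pos_add[of "Rep_lc z - Rep_lc y" "Rep_lc y - Rep_lc x"]
    unfolding less_eq_lc_def by auto
  show "x = y" if "x \<le> y" "y \<le> x"
    using that not_both unfolding less_eq_lc_def by auto
  show "z + x \<le> z + y" if "x \<le> y"
    using that unfolding less_eq_lc_def by (auto simp: plus_lc.rep_eq)
  show "x \<le> y \<or> y \<le> x"
    using lc_pos_total[of "Rep_lc y - Rep_lc x"] Rep_lc[of x] Rep_lc[of y] LC_diff eq_iff
    unfolding less_eq_lc_def by fastforce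
qed

end

lemma Rep_lc_add: "Rep_lc (x + y) = Rep_lc x + Rep_lc y"
  by (simp add: plus_lc.rep_eq)

lemma Rep_lc_diff: "Rep_lc (x - y) = Rep_lc x - Rep_lc y"
  by (simp add: minus_lc.rep_eq)

lemma Rep_lc_uminus: "Rep_lc (- x) = - Rep_lc x"
  by (simp add: uminus_lc.rep_eq)

lemma Rep_lc_zero: "Rep_lc 0 = 0"
  by (simp add: zero_lc.rep_eq)

lemma Rep_lc_sum: "Rep_lc (sum f F) = (\<Sum>i\<in>F. Rep_lc (f i))"
  by (induction F rule: infinite_finite_induct) (auto simp: Rep_lc_add Rep_lc_zero)

lemma Rep_lc_sum_apply: "Rep_lc (sum f F) p = (\<Sum>i\<in>F. Rep_lc (f i) p)"
  by (induction F rule: infinite_finite_induct) (auto simp: Rep_lc_add Rep_lc_zero)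

lemma Rep_lc_eq_iff: "Rep_lc x = Rep_lc y \<longleftrightarrow> x = y"
  by (rule Rep_lc_inject)

lemma zero_less_lc_iff: "0 < x \<longleftrightarrow> (\<exists>p0. Rep_lc x p0 > 0 \<and> (\<forall>p<p0. Rep_lc x p = 0))"
  unfolding less_lc_def Rep_lc_zero lc_pos_def by force

lemma lc_least_support:
  assumes "x \<noteq> 0"
  obtains p0 where "Rep_lc x p0 \<noteq> 0" "\<And>p. p < p0 \<Longrightarrow> Rep_lc x p = 0"
  using LC_least_support[of "Rep_lc x"] Rep_lc[of x] assms
  by (metis Rep_lc_inverse zero_lc_def)

lemma lc_leading_coeff_pos:
  assumes "0 < x" "Rep_lc x p0 \<noteq> 0" "\<And>p. p < p0 \<Longrightarrow> Rep_lc x p = 0"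
  shows "Rep_lc x p0 > 0"
proof -
  obtain q where q: "Rep_lc x q > 0" "\<forall>p<q. Rep_lc x p = 0"
    using assms(1) zero_less_lc_iff by blast
  have "q = p0" using q assms(2,3) by (cases q p0 rule: linorder_cases) auto
  thus ?thesis using q by simp
qed

section \<open>Orders of vanishing\<close>

definition vanishes_upto :: "rat \<Rightarrow> lc \<Rightarrow> bool" where
  "vanishes_upto q x \<longleftrightarrow> (\<forall>p\<le>q. Rep_lc x p = 0)"

lemma vanishes_upto_zero [simp]: "vanishes_upto q 0"
  by (simp add: vanishes_upto_def Rep_lc_zero)

lemma vanishes_upto_add: "vanishes_upto q x \<Longrightarrow> vanishes_upto q y \<Longrightarrow> vanishes_upto q (x + y)"
  by (simp add: vanishes_upto_def Rep_lc_add)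

lemma vanishes_upto_uminus_iff [simp]: "vanishes_upto q (- x) \<longleftrightarrow> vanishes_upto q x"
  by (simp add: vanishes_upto_def Rep_lc_uminus)

lemma vanishes_upto_diff: "vanishes_upto q x \<Longrightarrow> vanishes_upto q y \<Longrightarrow> vanishes_upto q (x - y)"
  by (simp add: vanishes_upto_def Rep_lc_diff)

lemma vanishes_upto_sum:
  "(\<And>i. i \<in> F \<Longrightarrow> vanishes_upto q (f i)) \<Longrightarrow> vanishes_upto q (sum f F)"
  by (simp add: vanishes_upto_def Rep_lc_sum_apply)

lemma vanishes_upto_mono: "vanishes_upto q x \<Longrightarrow> q' \<le> q \<Longrightarrow> vanishes_upto q' x"
  by (simp add: vanishes_upto_def)

lemma vanishes_upto_all_iff: "(\<forall>q. vanishes_upto q x) \<longleftrightarrow> x = 0"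
  by (auto simp: vanishes_upto_def fun_eq_iff Rep_lc_zero simp flip: Rep_lc_inject)

lemma lc_least_support_le:
  assumes "\<not> vanishes_upto q x"
  obtains p0 where "p0 \<le> q" "Rep_lc x p0 \<noteq> 0" "\<And>p. p < p0 \<Longrightarrow> Rep_lc x p = 0"
proof -
  obtain p where p: "p \<le> q" "Rep_lc x p \<noteq> 0" using assms by (auto simp: vanishes_upto_def)
  hence "x \<noteq> 0" by (auto simp: Rep_lc_zero)
  then obtain p0 where p0: "Rep_lc x p0 \<noteq> 0" "\<And>p. p < p0 \<Longrightarrow> Rep_lc x p = 0"
    using lc_least_support by blast
  have "p0 \<le> p" using p(2) p0(2) not_le by blast
  show ?thesis by (rule that[of p0]) (use p0 p(1) \<open>p0 \<le> p\<close> in auto)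
qed

lemma vanishes_upto_less:
  assumes "0 < z" "\<not> vanishes_upto q z" "vanishes_upto q y"
  shows "y < z"
proof -
  obtain p0 where "p0 \<le> q" and p0: "Rep_lc z p0 \<noteq> 0" "\<And>p. p < p0 \<Longrightarrow> Rep_lc z p = 0"
    using lc_least_support_le[OF assms(2)] by blast
  have "Rep_lc (z - y) p0 > 0"
    using lc_leading_coeff_pos[OF assms(1) p0] assms(3) \<open>p0 \<le> q\<close>
    by (simp add: vanishes_upto_def Rep_lc_diff)
  moreover have "\<forall>p<p0. Rep_lc (z - y) p = 0"
    using p0(2) assms(3) \<open>p0 \<le> q\<close> by (simp add: vanishes_upto_def Rep_lc_diff)
  ultimately have "0 < z - y" unfolding zero_less_lc_iff by blast
  thus ?thesis by simp
qed

lemma vanishes_upto_le: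
  assumes "0 \<le> x" "x \<le> y" "vanishes_upto q y"
  shows "vanishes_upto q x"
proof (rule ccontr)
  assume "\<not> vanishes_upto q x"
  moreover from this have "0 < x" using assms(1) by (metis order.order_iff_strict vanishes_upto_zero)
  ultimately have "y < x" using vanishes_upto_less assms(3) by blast
  thus False using assms(2) by simp
qed

lemma vanishes_upto_between:
  assumes "- w \<le> x" "x \<le> w'" "vanishes_upto q w" "vanishes_upto q w'"
  shows "vanishes_upto q x"
proof (cases "0 \<le> x")
  case True thus ?thesis using vanishes_upto_le assms by blast
next
  case False
  hence "vanishes_upto q (- x)"
    using vanishes_upto_le[of "- x" w] assms(1,3) by (simp add: minus_le_iff)
  thus ?thesis by simp
qed

lemma le_by_vanishing:
  assumes "\<And>q. \<exists>w. vanishes_upto q w \<and> x \<le> y + w"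
  shows "x \<le> y"
proof (rule ccontr)
  assume "\<not> x \<le> y"
  hence pos: "0 < x - y" by simp
  then obtain q where q: "\<not> vanishes_upto q (x - y)" using vanishes_upto_all_iff by force
  obtain w where "vanishes_upto q w" "x \<le> y + w" using assms by blast
  moreover from this have "w < x - y" using vanishes_upto_less[OF pos q] by blast
  ultimately show False by (simp add: algebra_simps)
qed

text \<open>\<open>monomial q t\<close> is \<open>t \<epsilon>\<^sup>q\<close>.\<close>

lift_definition monomial :: "rat \<Rightarrow> real \<Rightarrow> lc" is "\<lambda>q t p. if p = q then t else 0"
proof -
  fix q :: rat and t :: real
  have "finite {a. a < r \<and> (if a = q then t else 0) \<noteq> 0}" for r
    by (rule finite_subset[of _ "{q}"]) auto
  thus "(\<lambda>p. if p = q then t else 0) \<in> LC" by (simp add: LC_def)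
qed

lemma Rep_monomial: "Rep_lc (monomial q t) p = (if p = q then t else 0)"
  by (simp add: monomial.rep_eq)

lemma monomial_pos: "0 < t \<Longrightarrow> 0 < monomial q t"
  unfolding zero_less_lc_iff by (rule exI[of _ q]) (simp add: Rep_monomial)

lemma vanishes_upto_monomial: "q' < q \<Longrightarrow> vanishes_upto q' (monomial q t)"
  by (simp add: vanishes_upto_def Rep_monomial)

lemma not_vanishes_upto_monomial: "t \<noteq> 0 \<Longrightarrow> \<not> vanishes_upto q (monomial q t)"
  by (simp add: vanishes_upto_def Rep_monomial)

lemma vanishes_upto_less_monomial:
  assumes "vanishes_upto q w" "0 < t"
  shows "w < monomial q t"
  by (rule vanishes_upto_less) (use assms in \<open>simp_all add: monomial_pos not_vanishes_upto_monomial\<close>)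

lemma monomial_diff: "monomial q a - monomial q b = monomial q (a - b)"
  by (simp add: Rep_lc_inject[symmetric] Rep_lc_diff Rep_monomial fun_eq_iff)

lemma monomial_less: "a < b \<Longrightarrow> monomial q a < monomial q b"
  using monomial_pos[of "b - a" q] by (simp flip: monomial_diff)

lemma monomial_below:
  assumes "0 < x" "\<not> vanishes_upto q x"
  obtains t where "0 < t" "monomial q t < x"
proof -
  obtain p0 where "p0 \<le> q" and p0: "Rep_lc x p0 \<noteq> 0" "\<And>p. p < p0 \<Longrightarrow> Rep_lc x p = 0"
    using lc_least_support_le[OF assms(2)] by blast
  have pos: "Rep_lc x p0 > 0" using lc_leading_coeff_pos[OF assms(1) p0] .
  show ?thesis
  proof (cases "p0 < q")
    case True
    have "\<not> vanishes_upto p0 x" using p0(1) by (auto simp: vanishes_upto_def)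
    hence "monomial q 1 < x" using vanishes_upto_less[OF assms(1)] vanishes_upto_monomial[OF True] by blast
    thus ?thesis using that[of 1] by simp
  next
    case False
    hence "p0 = q" using \<open>p0 \<le> q\<close> by simp
    have "Rep_lc (x - monomial q (Rep_lc x p0 / 2)) p0 > 0"
      using pos \<open>p0 = q\<close> by (simp add: Rep_lc_diff Rep_monomial)
    moreover have "\<forall>p<p0. Rep_lc (x - monomial q (Rep_lc x p0 / 2)) p = 0"
      using p0(2) \<open>p0 = q\<close> by (simp add: Rep_lc_diff Rep_monomial)
    ultimately have "0 < x - monomial q (Rep_lc x p0 / 2)" unfolding zero_less_lc_iff by blast
    thus ?thesis using that[of "Rep_lc x p0 / 2"] pos by simp
  qed
qed

lift_definition half :: "lc \<Rightarrow> lc" is "\<lambda>x p. x p / 2"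
  by (simp add: LC_def)

lemma half_half: "half x + half x = x"
  by (simp add: Rep_lc_inject[symmetric] Rep_lc_add half.rep_eq fun_eq_iff)

instance lc :: dense_linorder
proof
  fix x y :: lc
  assume "x < y"
  hence "0 < y - x" by simp
  hence pos: "0 < half (y - x)" unfolding zero_less_lc_iff by (auto simp: half.rep_eq)
  moreover have "y = x + half (y - x) + half (y - x)"
    using half_half[of "y - x"] by (simp add: algebra_simps)
  ultimately have "x < x + half (y - x)" "x + half (y - x) < y"
    by (simp, metis add_less_cancel_left add.right_neutral)
  thus "\<exists>z. x < z \<and> z < y" by blast
qed

section \<open>Summable families\<close>

definition nonvanishing :: "rat \<Rightarrow> ('i \<Rightarrow> lc) \<Rightarrow> 'i set \<Rightarrow> 'i set" where
  "nonvanishing q f I = {i\<in>I. \<not> vanishes_upto q (f i)}"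

definition summable_fam :: "'i set \<Rightarrow> ('i \<Rightarrow> lc) \<Rightarrow> bool" where
  "summable_fam I f \<longleftrightarrow> (\<forall>q. finite (nonvanishing q f I))"

lemma finite_nonvanishing: "summable_fam I f \<Longrightarrow> finite (nonvanishing q f I)"
  by (simp add: summable_fam_def)

lemma nonvanishing_subset: "nonvanishing q f I \<subseteq> I"
  by (auto simp: nonvanishing_def)

lemma sum_coeff_eq:
  assumes "finite F" "F \<subseteq> I" "nonvanishing q f I \<subseteq> F" "p \<le> q"
  shows "(\<Sum>i\<in>{i\<in>I. Rep_lc (f i) p \<noteq> 0}. Rep_lc (f i) p) = Rep_lc (sum f F) p"
proof -
  have "{i\<in>I. Rep_lc (f i) p \<noteq> 0} \<subseteq> F"
    using assms(3,4) by (auto simp: nonvanishing_def vanishes_upto_def)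
  hence "(\<Sum>i\<in>{i\<in>I. Rep_lc (f i) p \<noteq> 0}. Rep_lc (f i) p) = (\<Sum>i\<in>F. Rep_lc (f i) p)"
    by (intro sum.mono_neutral_left assms(1)) (use assms(2) in auto)
  thus ?thesis by (simp add: Rep_lc_sum_apply)
qed

lemma sum_coeff_LC:
  assumes "summable_fam I f"
  shows "(\<lambda>p. \<Sum>i\<in>{i\<in>I. Rep_lc (f i) p \<noteq> 0}. Rep_lc (f i) p) \<in> LC"
proof -
  have "finite {a. a < r \<and> (\<Sum>i\<in>{i\<in>I. Rep_lc (f i) a \<noteq> 0}. Rep_lc (f i) a) \<noteq> 0}" for r
  proof (rule finite_subset)
    show "finite {a. a < r \<and> Rep_lc (sum f (nonvanishing r f I)) a \<noteq> 0}"
      using Rep_lc[of "sum f (nonvanishing r f I)"] by (simp add: LC_def)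
    show "{a. a < r \<and> (\<Sum>i\<in>{i\<in>I. Rep_lc (f i) a \<noteq> 0}. Rep_lc (f i) a) \<noteq> 0}
        \<subseteq> {a. a < r \<and> Rep_lc (sum f (nonvanishing r f I)) a \<noteq> 0}"
      using sum_coeff_eq[where q=r, OF finite_nonvanishing[OF assms] nonvanishing_subset order_refl]
      by (auto simp: less_imp_le)
  qed
  thus ?thesis by (simp add: LC_def)
qed

text \<open>Only finitely many terms contribute to each coefficient; non-summable families get the junk
  value \<open>0\<close>.\<close>

lift_definition sum_fam :: "'i set \<Rightarrow> ('i \<Rightarrow> lc) \<Rightarrow> lc" is
  "\<lambda>I f. if summable_fam I f then (\<lambda>p. \<Sum>i\<in>{i\<in>I. Rep_lc (f i) p \<noteq> 0}. Rep_lc (f i) p) else 0"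
  using sum_coeff_LC LC_zero by auto

lemma sum_fam_approx:
  assumes "summable_fam I f" "finite F" "F \<subseteq> I" "nonvanishing q f I \<subseteq> F"
  shows "vanishes_upto q (sum_fam I f - sum f F)"
  using sum_coeff_eq[OF assms(2-4)] assms(1)
  by (simp add: vanishes_upto_def Rep_lc_diff sum_fam.rep_eq)

lemma sum_fam_approx_nonvanishing:
  "summable_fam I f \<Longrightarrow> vanishes_upto q (sum_fam I f - sum f (nonvanishing q f I))"
  by (rule sum_fam_approx) (auto simp: finite_nonvanishing nonvanishing_subset)

lemma sum_fam_unique:
  assumes "summable_fam I f"
    and "\<And>q. \<exists>F. finite F \<and> F \<subseteq> I \<and> nonvanishing q f I \<subseteq> F \<and> vanishes_upto q (x - sum f F)"
  shows "x = sum_fam I f"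
proof -
  have "vanishes_upto q (x - sum_fam I f)" for q
  proof -
    obtain F where F: "finite F" "F \<subseteq> I" "nonvanishing q f I \<subseteq> F" "vanishes_upto q (x - sum f F)"
      using assms(2) by blast
    from vanishes_upto_diff[OF F(4) sum_fam_approx[OF assms(1) F(1-3)]] show ?thesis by simp
  qed
  thus ?thesis using vanishes_upto_all_iff[of "x - sum_fam I f"] by simp
qed

lemma sum_le_sum_fam:
  assumes "summable_fam I f" "\<And>i. i \<in> I \<Longrightarrow> 0 \<le> f i" "finite F" "F \<subseteq> I"
  shows "sum f F \<le> sum_fam I f"
proof (rule le_by_vanishing)
  fix q
  define G where "G = F \<union> nonvanishing q f I"
  have G: "finite G" "G \<subseteq> I" "nonvanishing q f I \<subseteq> G"
    using assms(3,4) finite_nonvanishing[OF assms(1)] by (auto simp: G_def nonvanishing_def)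
  have "sum f F \<le> sum f G"
    by (rule sum_mono2[OF G(1)]) (use assms(2) G(2) in \<open>auto simp: G_def\<close>)
  hence "sum f F \<le> sum_fam I f + - (sum_fam I f - sum f G)" by simp
  moreover have "vanishes_upto q (- (sum_fam I f - sum f G))"
    using sum_fam_approx[OF assms(1) G] by (simp only: vanishes_upto_uminus_iff)
  ultimately show "\<exists>w. vanishes_upto q w \<and> sum f F \<le> sum_fam I f + w" by blast
qed

lemma sum_fam_mono:
  assumes "summable_fam I f" "summable_fam I g" "\<And>i. i \<in> I \<Longrightarrow> f i \<le> g i"
  shows "sum_fam I f \<le> sum_fam I g"
proof (rule le_by_vanishing)
  fix q
  define G where "G = nonvanishing q f I \<union> nonvanishing q g I"
  have G: "finite G" "G \<subseteq> I"
    using finite_nonvanishing[OF assms(1)] finite_nonvanishing[OF assms(2)]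
    by (auto simp: G_def nonvanishing_def)
  have f: "vanishes_upto q (sum_fam I f - sum f G)" by (rule sum_fam_approx[OF assms(1) G]) (auto simp: G_def)
  have g: "vanishes_upto q (sum_fam I g - sum g G)" by (rule sum_fam_approx[OF assms(2) G]) (auto simp: G_def)
  have "sum f G \<le> sum g G" using sum_mono assms(3) G(2) by (metis subsetD)
  hence "sum_fam I f \<le> sum_fam I g + ((sum_fam I f - sum f G) - (sum_fam I g - sum g G))"
    by (simp add: algebra_simps)
  thus "\<exists>w. vanishes_upto q w \<and> sum_fam I f \<le> sum_fam I g + w" using vanishes_upto_diff[OF f g] by blast
qed

lemma summable_fam_add:
  assumes "summable_fam I f" "summable_fam I g"
  shows "summable_fam I (\<lambda>i. f i + g i)"
  unfolding summable_fam_def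
proof
  fix q
  have "nonvanishing q (\<lambda>i. f i + g i) I \<subseteq> nonvanishing q f I \<union> nonvanishing q g I"
    by (auto simp: nonvanishing_def intro: vanishes_upto_add)
  thus "finite (nonvanishing q (\<lambda>i. f i + g i) I)"
    using finite_nonvanishing[OF assms(1)] finite_nonvanishing[OF assms(2)] finite_subset by blast
qed

lemma sum_fam_add:
  assumes "summable_fam I f" "summable_fam I g"
  shows "sum_fam I (\<lambda>i. f i + g i) = sum_fam I f + sum_fam I g"
proof (rule sum_fam_unique[symmetric, OF summable_fam_add[OF assms]])
  fix q
  define G where "G = nonvanishing q f I \<union> nonvanishing q g I"
  have G: "finite G" "G \<subseteq> I"
    using finite_nonvanishing[OF assms(1)] finite_nonvanishing[OF assms(2)]
    by (auto simp: G_def nonvanishing_def)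
  have f: "vanishes_upto q (sum_fam I f - sum f G)" by (rule sum_fam_approx[OF assms(1) G]) (auto simp: G_def)
  have g: "vanishes_upto q (sum_fam I g - sum g G)" by (rule sum_fam_approx[OF assms(2) G]) (auto simp: G_def)
  have "nonvanishing q (\<lambda>i. f i + g i) I \<subseteq> G"
    by (auto simp: nonvanishing_def G_def intro: vanishes_upto_add)
  moreover have "sum_fam I f + sum_fam I g - sum (\<lambda>i. f i + g i) G
      = (sum_fam I f - sum f G) + (sum_fam I g - sum g G)"
    by (simp add: sum.distrib algebra_simps)
  ultimately show "\<exists>F. finite F \<and> F \<subseteq> I \<and> nonvanishing q (\<lambda>i. f i + g i) I \<subseteq> F \<and>
      vanishes_upto q (sum_fam I f + sum_fam I g - sum (\<lambda>i. f i + g i) F)"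
    using G vanishes_upto_add[OF f g] by metis
qed

lemma vanishes_upto_sum_fam:
  assumes "summable_fam I f" "\<And>i. i \<in> I \<Longrightarrow> vanishes_upto q (f i)"
  shows "vanishes_upto q (sum_fam I f)"
proof -
  have "nonvanishing q f I = {}" using assms(2) by (auto simp: nonvanishing_def)
  thus ?thesis using sum_fam_approx[OF assms(1), of "{}" q] by simp
qed

lemma summable_fam_comparison:
  assumes "\<And>i. i \<in> I \<Longrightarrow> 0 \<le> f i \<and> f i \<le> g i" "summable_fam I g"
  shows "summable_fam I f"
  unfolding summable_fam_def
proof
  fix q
  have "nonvanishing q f I \<subseteq> nonvanishing q g I"
    using assms(1) vanishes_upto_le by (auto simp: nonvanishing_def)
  thus "finite (nonvanishing q f I)" using finite_nonvanishing[OF assms(2)] finite_subset by blast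
qed

lemma summable_fam_cong:
  assumes "\<And>i. i \<in> I \<Longrightarrow> f i = g i"
  shows "summable_fam I f = summable_fam I g"
proof -
  have "nonvanishing q f I = nonvanishing q g I" for q
    using assms by (auto simp: nonvanishing_def)
  thus ?thesis by (simp add: summable_fam_def)
qed

lemma sum_fam_cong:
  assumes "\<And>i. i \<in> I \<Longrightarrow> f i = g i"
  shows "sum_fam I f = sum_fam I g"
proof -
  have "(\<lambda>p. \<Sum>i\<in>{i\<in>I. Rep_lc (f i) p \<noteq> 0}. Rep_lc (f i) p)
      = (\<lambda>p. \<Sum>i\<in>{i\<in>I. Rep_lc (g i) p \<noteq> 0}. Rep_lc (g i) p)"
    using assms by (intro ext sum.cong) auto
  moreover have "summable_fam I f = summable_fam I g" by (rule summable_fam_cong) (rule assms)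
  ultimately show ?thesis by (simp add: Rep_lc_inject[symmetric] sum_fam.rep_eq)
qed

lemma sum_fam_finite_support:
  assumes "finite F" "\<And>i. i \<notin> F \<Longrightarrow> f i = 0"
  shows "summable_fam UNIV f" "sum_fam UNIV f = sum f F"
proof -
  have sub: "nonvanishing q f UNIV \<subseteq> F" for q
    using assms(2) by (clarsimp simp: nonvanishing_def) (metis vanishes_upto_zero)
  show sf: "summable_fam UNIV f"
    unfolding summable_fam_def using sub assms(1) finite_subset by blast
  show "sum_fam UNIV f = sum f F"
    by (rule sum_fam_unique[symmetric, OF sf], rule exI[of _ F]) (use assms(1) sub in auto)
qed

lemma sum_fam_reindex:
  assumes "bij_betw h J I" "summable_fam I f"
  shows "summable_fam J (\<lambda>j. f (h j))" "sum_fam J (\<lambda>j. f (h j)) = sum_fam I f"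
proof -
  have img: "h ` nonvanishing q (\<lambda>j. f (h j)) J = nonvanishing q f I" for q
    using assms(1) by (auto simp: nonvanishing_def bij_betw_def)
  have inj: "inj_on h (nonvanishing q (\<lambda>j. f (h j)) J)" for q
    using assms(1) by (auto simp: bij_betw_def nonvanishing_def intro: inj_on_subset)
  have fin: "finite (nonvanishing q (\<lambda>j. f (h j)) J)" for q
    using finite_imageD[OF _ inj[of q]] img[of q] finite_nonvanishing[OF assms(2)] by simp
  show sJ: "summable_fam J (\<lambda>j. f (h j))" using fin by (simp add: summable_fam_def)
  show "sum_fam J (\<lambda>j. f (h j)) = sum_fam I f"
  proof (rule sum_fam_unique[symmetric, OF sJ])
    fix q
    have "sum (\<lambda>j. f (h j)) (nonvanishing q (\<lambda>j. f (h j)) J) = sum f (nonvanishing q f I)"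
      using sum.reindex[OF inj[of q], of f] img[of q] by simp
    thus "\<exists>F. finite F \<and> F \<subseteq> J \<and> nonvanishing q (\<lambda>j. f (h j)) J \<subseteq> F \<and>
        vanishes_upto q (sum_fam I f - sum (\<lambda>j. f (h j)) F)"
      using fin[of q] nonvanishing_subset[of q "\<lambda>j. f (h j)" J] sum_fam_approx_nonvanishing[OF assms(2), of q]
      by (metis order_refl)
  qed
qed

lemma sum_fam_Un:
  assumes "I \<inter> I' = {}" "summable_fam I f" "summable_fam I' f"
  shows "summable_fam (I \<union> I') f" "sum_fam (I \<union> I') f = sum_fam I f + sum_fam I' f"
proof -
  have Un: "nonvanishing q f (I \<union> I') = nonvanishing q f I \<union> nonvanishing q f I'" for q
    by (auto simp: nonvanishing_def)
  show sU: "summable_fam (I \<union> I') f"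
    using finite_nonvanishing[OF assms(2)] finite_nonvanishing[OF assms(3)] Un
    by (simp add: summable_fam_def)
  show "sum_fam (I \<union> I') f = sum_fam I f + sum_fam I' f"
  proof (rule sum_fam_unique[symmetric, OF sU])
    fix q
    have "nonvanishing q f I \<inter> nonvanishing q f I' = {}"
      using assms(1) by (auto simp: nonvanishing_def)
    hence "sum_fam I f + sum_fam I' f - sum f (nonvanishing q f (I \<union> I'))
        = (sum_fam I f - sum f (nonvanishing q f I)) + (sum_fam I' f - sum f (nonvanishing q f I'))"
      using finite_nonvanishing[OF assms(2)] finite_nonvanishing[OF assms(3)]
      by (simp add: Un sum.union_disjoint algebra_simps)
    moreover have "vanishes_upto q
        ((sum_fam I f - sum f (nonvanishing q f I)) + (sum_fam I' f - sum f (nonvanishing q f I')))"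
      by (intro vanishes_upto_add sum_fam_approx_nonvanishing assms(2,3))
    ultimately have "vanishes_upto q (sum_fam I f + sum_fam I' f - sum f (nonvanishing q f (I \<union> I')))"
      by (simp only:)
    thus "\<exists>F. finite F \<and> F \<subseteq> I \<union> I' \<and> nonvanishing q f (I \<union> I') \<subseteq> F \<and>
        vanishes_upto q (sum_fam I f + sum_fam I' f - sum f F)"
      using finite_nonvanishing[OF sU] nonvanishing_subset[of q f "I \<union> I'"] by blast
  qed
qed

lemma summable_fam_Sigma:
  fixes g :: "'a \<times> 'b \<Rightarrow> lc"
  assumes "summable_fam UNIV g"
  shows "summable_fam UNIV (\<lambda>n. g (k, n))"
proof -
  have "nonvanishing q (\<lambda>n. g (k, n)) UNIV = snd ` (nonvanishing q g UNIV \<inter> {p. fst p = k})" for q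
    by (force simp: nonvanishing_def)
  thus ?thesis using finite_nonvanishing[OF assms] by (simp add: summable_fam_def)
qed

lemma nonvanishing_row_sums:
  fixes g :: "'a \<times> 'b \<Rightarrow> lc"
  assumes "summable_fam UNIV g"
  shows "nonvanishing q (\<lambda>k. sum_fam UNIV (\<lambda>n. g (k, n))) UNIV \<subseteq> fst ` nonvanishing q g UNIV"
proof
  fix k assume k: "k \<in> nonvanishing q (\<lambda>k. sum_fam UNIV (\<lambda>n. g (k, n))) UNIV"
  show "k \<in> fst ` nonvanishing q g UNIV"
  proof (rule ccontr)
    assume "k \<notin> fst ` nonvanishing q g UNIV"
    hence "vanishes_upto q (g (k, n))" for n by (force simp: nonvanishing_def)
    hence "vanishes_upto q (sum_fam UNIV (\<lambda>n. g (k, n)))"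
      by (intro vanishes_upto_sum_fam[OF summable_fam_Sigma[OF assms]])
    thus False using k by (simp add: nonvanishing_def)
  qed
qed

lemma summable_fam_row_sums:
  fixes g :: "'a \<times> 'b \<Rightarrow> lc"
  assumes "summable_fam UNIV g"
  shows "summable_fam UNIV (\<lambda>k. sum_fam UNIV (\<lambda>n. g (k, n)))"
  unfolding summable_fam_def
  using nonvanishing_row_sums[OF assms] finite_nonvanishing[OF assms] by (metis finite_imageI finite_subset)

lemma sum_fam_Sigma:
  fixes g :: "'a \<times> 'b \<Rightarrow> lc"
  assumes "summable_fam UNIV g"
  shows "sum_fam UNIV g = sum_fam UNIV (\<lambda>k. sum_fam UNIV (\<lambda>n. g (k, n)))"
proof (rule sum_fam_unique[OF summable_fam_row_sums[OF assms]])
  fix q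
  define h where "h k = sum_fam UNIV (\<lambda>n. g (k, n))" for k
  define G where "G = nonvanishing q g UNIV"
  define K where "K = fst ` G"
  define row where "row k = {n. (k, n) \<in> G}" for k
  have fG: "finite G" using finite_nonvanishing[OF assms] by (simp add: G_def)
  have fK: "finite K" using fG by (simp add: K_def)
  have frow: "finite (row k)" for k
    using finite_subset[of "row k" "snd ` G"] fG by (force simp: row_def)
  have hk: "vanishes_upto q (h k - sum (\<lambda>n. g (k, n)) (row k))" for k
    unfolding h_def by (rule sum_fam_approx[OF summable_fam_Sigma[OF assms] frow])
      (auto simp: row_def G_def nonvanishing_def)
  have "G = Sigma K row" by (force simp: K_def row_def)
  hence "sum g G = (\<Sum>k\<in>K. sum (\<lambda>n. g (k, n)) (row k))"
    by (simp add: sum.Sigma fK frow)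
  hence "sum_fam UNIV g - sum h K
      = (sum_fam UNIV g - sum g G) - (\<Sum>k\<in>K. h k - sum (\<lambda>n. g (k, n)) (row k))"
    by (simp add: sum_subtractf algebra_simps)
  moreover have "vanishes_upto q (sum_fam UNIV g - sum g G)"
    unfolding G_def by (rule sum_fam_approx_nonvanishing[OF assms])
  moreover have "vanishes_upto q (\<Sum>k\<in>K. h k - sum (\<lambda>n. g (k, n)) (row k))"
    by (rule vanishes_upto_sum) (rule hk)
  ultimately have "vanishes_upto q (sum_fam UNIV g - sum h K)"
    by (simp only: vanishes_upto_diff)
  thus "\<exists>F. finite F \<and> F \<subseteq> UNIV \<and> nonvanishing q (\<lambda>k. sum_fam UNIV (\<lambda>n. g (k, n))) UNIV \<subseteq> F \<and>
      vanishes_upto q (sum_fam UNIV g - sum (\<lambda>k. sum_fam UNIV (\<lambda>n. g (k, n))) F)"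
    using fK nonvanishing_row_sums[OF assms, of q] by (auto simp: K_def G_def h_def)
qed

lemma summable_fam_prod:
  fixes h :: "'a \<times> 'b \<Rightarrow> lc"
  assumes "summable_fam UNIV f" "summable_fam UNIV g"
    and "\<And>k n. 0 \<le> h (k, n) \<and> h (k, n) \<le> f k \<and> h (k, n) \<le> g n"
  shows "summable_fam UNIV h"
  unfolding summable_fam_def
proof
  fix q
  have "nonvanishing q h UNIV \<subseteq> nonvanishing q f UNIV \<times> nonvanishing q g UNIV"
  proof (clarify)
    fix k n assume "(k, n) \<in> nonvanishing q h UNIV"
    hence "\<not> vanishes_upto q (h (k, n))" by (simp add: nonvanishing_def)
    thus "k \<in> nonvanishing q f UNIV \<and> n \<in> nonvanishing q g UNIV"
      using assms(3)[of k n] vanishes_upto_le by (auto simp: nonvanishing_def)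
  qed
  thus "finite (nonvanishing q h UNIV)"
    using finite_nonvanishing[OF assms(1)] finite_nonvanishing[OF assms(2)] finite_subset by blast
qed

lemma summable_fam_nat_iff:
  "summable_fam (UNIV :: nat set) f \<longleftrightarrow> (\<forall>q. \<exists>N. \<forall>n\<ge>N. vanishes_upto q (f n))"
proof -
  have "finite (nonvanishing q f UNIV) \<longleftrightarrow> (\<exists>N. \<forall>n\<ge>N. vanishes_upto q (f n))" for q
  proof
    assume "finite (nonvanishing q f UNIV)"
    then obtain N where "nonvanishing q f UNIV \<subseteq> {..<N}" using finite_nat_bounded by blast
    hence "\<forall>n\<ge>N. vanishes_upto q (f n)" by (auto simp: nonvanishing_def subset_iff not_less[symmetric])
    thus "\<exists>N. \<forall>n\<ge>N. vanishes_upto q (f n)" by blast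
  next
    assume "\<exists>N. \<forall>n\<ge>N. vanishes_upto q (f n)"
    then obtain N where "nonvanishing q f UNIV \<subseteq> {..<N}"
      by (auto simp: nonvanishing_def not_less[symmetric])
    thus "finite (nonvanishing q f UNIV)" using finite_subset by blast
  qed
  thus ?thesis by (simp add: summable_fam_def)
qed

lemma partial_sums_approx_sum_fam:
  assumes "summable_fam (UNIV :: nat set) f"
  obtains N where "\<And>n. n \<ge> N \<Longrightarrow> vanishes_upto q (sum f {..<n} - sum_fam UNIV f)"
proof -
  obtain N where N: "\<forall>n\<ge>N. vanishes_upto q (f n)" using assms summable_fam_nat_iff by blast
  have "vanishes_upto q (sum f {..<n} - sum_fam UNIV f)" if "n \<ge> N" for n
  proof -
    have "nonvanishing q f UNIV \<subseteq> {..<n}"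
      using N that by (auto simp: nonvanishing_def) (meson le_trans not_le)
    hence "vanishes_upto q (sum_fam UNIV f - sum f {..<n})" by (intro sum_fam_approx[OF assms]) auto
    thus ?thesis by (metis minus_diff_eq vanishes_upto_uminus_iff)
  qed
  thus ?thesis using that by blast
qed

lemma summable_fam_of_partial_sums:
  fixes f :: "nat \<Rightarrow> lc"
  assumes "\<And>q. \<exists>N. \<forall>n\<ge>N. vanishes_upto q (sum f {..<n} - L)"
  shows "summable_fam UNIV f" "L = sum_fam UNIV f"
proof -
  show sf: "summable_fam UNIV f" unfolding summable_fam_nat_iff
  proof
    fix q
    obtain N where N: "\<forall>n\<ge>N. vanishes_upto q (sum f {..<n} - L)" using assms by blast
    have "f n = (sum f {..<Suc n} - L) - (sum f {..<n} - L)" for n by simp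
    hence "\<forall>n\<ge>N. vanishes_upto q (f n)" using N vanishes_upto_diff by (metis le_SucI)
    thus "\<exists>N. \<forall>n\<ge>N. vanishes_upto q (f n)" by blast
  qed
  have "vanishes_upto q (L - sum_fam UNIV f)" for q
  proof -
    obtain N where N: "\<forall>n\<ge>N. vanishes_upto q (sum f {..<n} - L)" using assms by blast
    obtain N' where N': "\<And>n. n \<ge> N' \<Longrightarrow> vanishes_upto q (sum f {..<n} - sum_fam UNIV f)"
      using partial_sums_approx_sum_fam[OF sf] by blast
    have "L - sum_fam UNIV f = (sum f {..<max N N'} - sum_fam UNIV f) - (sum f {..<max N N'} - L)"
      by simp
    thus ?thesis using N N' vanishes_upto_diff by (metis max.cobounded1 max.cobounded2)
  qed
  thus "L = sum_fam UNIV f" using vanishes_upto_all_iff[of "L - sum_fam UNIV f"] by simp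
qed

lemma sum_fam_split_at:
  fixes f :: "nat \<Rightarrow> lc"
  assumes "summable_fam UNIV f"
  shows "summable_fam UNIV (\<lambda>n. if N \<le> n then f n else 0)"
    "sum_fam UNIV f = (\<Sum>n<N. f n) + sum_fam UNIV (\<lambda>n. if N \<le> n then f n else 0)"
proof -
  define head where "head n = (if n < N then f n else 0)" for n
  have head: "summable_fam UNIV head" "sum_fam UNIV head = (\<Sum>n<N. f n)"
    using sum_fam_finite_support[of "{..<N}" head] by (auto simp: head_def)
  show tail: "summable_fam UNIV (\<lambda>n. if N \<le> n then f n else 0)"
  proof -
    have "nonvanishing q (\<lambda>n. if N \<le> n then f n else 0) UNIV \<subseteq> nonvanishing q f UNIV" for q
      by (auto simp: nonvanishing_def)
    thus ?thesis using finite_nonvanishing[OF assms] finite_subset unfolding summable_fam_def by blast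
  qed
  have "sum_fam UNIV f = sum_fam UNIV (\<lambda>n. head n + (if N \<le> n then f n else 0))"
    by (rule sum_fam_cong) (simp add: head_def)
  thus "sum_fam UNIV f = (\<Sum>n<N. f n) + sum_fam UNIV (\<lambda>n. if N \<le> n then f n else 0)"
    using sum_fam_add[OF head(1) tail] head(2) by simp
qed

section \<open>Limits, intervals, covers and outer measure\<close>

lemma LC_eq_range_Rep_lc: "LC = range Rep_lc"
  by (simp add: type_definition.Rep_range[OF type_definition_lc])

lemma lc_less_Rep: "lc_less (Rep_lc a) (Rep_lc b) \<longleftrightarrow> a < b"
  by (simp add: lc_less_def less_lc_def)

lemma lc_le_Rep: "lc_le (Rep_lc a) (Rep_lc b) \<longleftrightarrow> a \<le> b"
  by (auto simp: lc_le_def lc_less_Rep Rep_lc_inject)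

lemma lc_abs_less_Rep:
  assumes "0 < e"
  shows "lc_less (lc_abs (Rep_lc a)) (Rep_lc e) \<longleftrightarrow> a < e \<and> - a < e"
proof -
  have "lc_pos (- Rep_lc a) \<longleftrightarrow> a < 0"
    by (simp add: less_lc_def Rep_lc_zero)
  hence "lc_abs (Rep_lc a) = Rep_lc (if a < 0 then - a else a)"
    by (simp add: lc_abs_def Rep_lc_uminus)
  moreover have "- a < e" if "\<not> a < 0"
    using that assms by (meson neg_le_0_iff_le not_le order.strict_trans1)
  ultimately show ?thesis using assms by (auto simp: lc_less_Rep)
qed

lemma vanishes_upto_if_abs_less_monomial:
  assumes "a < monomial q' t" "- a < monomial q' t" "q < q'"
  shows "vanishes_upto q a"
proof (rule ccontr)
  assume nv: "\<not> vanishes_upto q a"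
  have "vanishes_upto q (monomial q' t)" using assms(3) by (rule vanishes_upto_monomial)
  moreover have "0 < a \<or> 0 < - a" using nv by (cases a "0 :: lc" rule: linorder_cases) auto
  ultimately show False
    using vanishes_upto_less[of a q] vanishes_upto_less[of "- a" q] nv assms(1,2)
    by (auto dest: order.asym)
qed

lemma lc_tendsto_Rep_iff:
  "lc_tendsto (\<lambda>n. Rep_lc (f n)) L \<longleftrightarrow>
    (\<exists>l. L = Rep_lc l \<and> (\<forall>q. \<exists>N. \<forall>n\<ge>N. vanishes_upto q (f n - l)))"
proof
  assume lim: "lc_tendsto (\<lambda>n. Rep_lc (f n)) L"
  then obtain l where l: "L = Rep_lc l" by (auto simp: lc_tendsto_def LC_eq_range_Rep_lc)
  have "\<exists>N. \<forall>n\<ge>N. vanishes_upto q (f n - l)" for q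
  proof -
    have pos: "0 < monomial (q + 1) 1" by (simp add: monomial_pos)
    hence "lc_pos (Rep_lc (monomial (q + 1) 1))" by (simp add: less_lc_def Rep_lc_zero)
    then obtain N where "\<forall>n\<ge>N. lc_less (lc_abs (Rep_lc (f n) - L)) (Rep_lc (monomial (q + 1) 1))"
      using lim Rep_lc unfolding lc_tendsto_def by blast
    hence "\<forall>n\<ge>N. lc_less (lc_abs (Rep_lc (f n - l))) (Rep_lc (monomial (q + 1) 1))"
      by (simp add: l Rep_lc_diff)
    hence "\<forall>n\<ge>N. f n - l < monomial (q + 1) 1 \<and> - (f n - l) < monomial (q + 1) 1"
      using lc_abs_less_Rep[OF pos] by blast
    hence "vanishes_upto q (f n - l)" if "n \<ge> N" for n
      by (intro vanishes_upto_if_abs_less_monomial[where q'="q + 1" and t=1]) (use that in auto)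
    thus ?thesis by blast
  qed
  thus "\<exists>l. L = Rep_lc l \<and> (\<forall>q. \<exists>N. \<forall>n\<ge>N. vanishes_upto q (f n - l))" using l by blast
next
  assume "\<exists>l. L = Rep_lc l \<and> (\<forall>q. \<exists>N. \<forall>n\<ge>N. vanishes_upto q (f n - l))"
  then obtain l where l: "L = Rep_lc l" and conv: "\<forall>q. \<exists>N. \<forall>n\<ge>N. vanishes_upto q (f n - l)"
    by blast
  have "\<exists>N. \<forall>n\<ge>N. lc_less (lc_abs (Rep_lc (f n) - L)) (Rep_lc e)" if e: "0 < e" for e
  proof -
    obtain q where q: "\<not> vanishes_upto q e" using e vanishes_upto_all_iff by force
    obtain N where "\<forall>n\<ge>N. vanishes_upto q (f n - l)" using conv by blast
    hence "\<forall>n\<ge>N. f n - l < e \<and> - (f n - l) < e"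
      using vanishes_upto_less[OF e q] vanishes_upto_uminus_iff by blast
    hence "\<forall>n\<ge>N. lc_less (lc_abs (Rep_lc (f n - l))) (Rep_lc e)"
      using lc_abs_less_Rep[OF e] by blast
    thus ?thesis by (auto simp: l Rep_lc_diff)
  qed
  thus "lc_tendsto (\<lambda>n. Rep_lc (f n)) L"
    unfolding lc_tendsto_def LC_eq_range_Rep_lc
    by (auto simp: l less_lc_def Rep_lc_zero)
qed

lemma lc_sums_Rep_iff:
  "lc_sums (\<lambda>n. Rep_lc (f n)) S \<longleftrightarrow>
    (\<exists>l. S = Rep_lc l \<and> (\<forall>q. \<exists>N. \<forall>n\<ge>N. vanishes_upto q (sum f {..<n} - l)))"
  using lc_tendsto_Rep_iff[of "\<lambda>n. sum f {..<n}" S] by (simp add: lc_sums_def Rep_lc_sum)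

lemma lc_sums_sum_fam:
  assumes "summable_fam UNIV f"
  shows "lc_sums (\<lambda>n. Rep_lc (f n)) (Rep_lc (sum_fam UNIV f))"
proof -
  have "\<exists>N. \<forall>n\<ge>N. vanishes_upto q (sum f {..<n} - sum_fam UNIV f)" for q
    using partial_sums_approx_sum_fam[OF assms, of q] by blast
  thus ?thesis unfolding lc_sums_Rep_iff by blast
qed

lemma lc_sums_Rep_imp:
  "lc_sums (\<lambda>n. Rep_lc (f n)) S \<Longrightarrow> summable_fam UNIV f \<and> S = Rep_lc (sum_fam UNIV f)"
  unfolding lc_sums_Rep_iff using summable_fam_of_partial_sums by metis

lemma lc_suminf_Rep:
  "summable_fam UNIV f \<Longrightarrow> lc_suminf (\<lambda>n. Rep_lc (f n)) = Rep_lc (sum_fam UNIV f)"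
  unfolding lc_suminf_def by (rule the_equality) (auto simp: lc_sums_sum_fam dest: lc_sums_Rep_imp)

lemma lc_summable_Rep_iff: "lc_summable (\<lambda>n. Rep_lc (f n)) \<longleftrightarrow> summable_fam UNIV f"
  unfolding lc_summable_def using lc_sums_sum_fam lc_sums_Rep_imp by blast

lemma Collect_range_Rep_lc: "{x \<in> range Rep_lc. P x} = Rep_lc ` {z. P (Rep_lc z)}"
  by blast

lemma lc_interval_Rep:
  assumes "lc_interval a b S"
  obtains \<alpha> \<beta> where "a = Rep_lc \<alpha>" "b = Rep_lc \<beta>" "\<alpha> < \<beta>"
    "Rep_lc ` {\<alpha><..<\<beta>} \<subseteq> S" "S \<subseteq> Rep_lc ` {\<alpha>..\<beta>}"
proof -
  obtain \<alpha> \<beta> where ab: "a = Rep_lc \<alpha>" "b = Rep_lc \<beta>"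
    using assms by (auto simp: lc_interval_def LC_eq_range_Rep_lc)
  have "\<alpha> < \<beta>" using assms by (simp add: lc_interval_def ab lc_less_Rep)
  have "S = Rep_lc ` {\<alpha>..\<beta>} \<or> S = Rep_lc ` {\<alpha>..<\<beta>} \<or> S = Rep_lc ` {\<alpha><..\<beta>} \<or>
      S = Rep_lc ` {\<alpha><..<\<beta>}"
    using assms unfolding lc_interval_def LC_eq_range_Rep_lc ab Collect_range_Rep_lc
    by (simp add: lc_le_Rep lc_less_Rep atLeastAtMost_def atLeastLessThan_def
        greaterThanAtMost_def greaterThanLessThan_def atLeast_def atMost_def lessThan_def
        greaterThan_def Int_def)
  moreover have "{\<alpha><..<\<beta>} \<subseteq> I" "I \<subseteq> {\<alpha>..\<beta>}"
    if "I = {\<alpha>..\<beta>} \<or> I = {\<alpha>..<\<beta>} \<or> I = {\<alpha><..\<beta>} \<or> I = {\<alpha><..<\<beta>}" for I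
    using that by auto
  ultimately have "Rep_lc ` {\<alpha><..<\<beta>} \<subseteq> S" "S \<subseteq> Rep_lc ` {\<alpha>..\<beta>}"
    by (metis image_mono)+
  thus ?thesis using that ab \<open>\<alpha> < \<beta>\<close> by blast
qed

lemma lc_interval_endpoints_unique:
  assumes "lc_interval a b S" "lc_interval a' b' S"
  shows "a = a' \<and> b = b'"
proof -
  obtain \<alpha> \<beta> where I: "a = Rep_lc \<alpha>" "b = Rep_lc \<beta>" "\<alpha> < \<beta>"
    "Rep_lc ` {\<alpha><..<\<beta>} \<subseteq> S" "S \<subseteq> Rep_lc ` {\<alpha>..\<beta>}"
    using lc_interval_Rep[OF assms(1)] by blast
  obtain \<alpha>' \<beta>' where I': "a' = Rep_lc \<alpha>'" "b' = Rep_lc \<beta>'" "\<alpha>' < \<beta>'"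
    "Rep_lc ` {\<alpha>'<..<\<beta>'} \<subseteq> S" "S \<subseteq> Rep_lc ` {\<alpha>'..\<beta>'}"
    using lc_interval_Rep[OF assms(2)] by blast
  have inj: "inj Rep_lc" by (rule injI) (simp add: Rep_lc_inject)
  have "Rep_lc ` {\<alpha><..<\<beta>} \<subseteq> Rep_lc ` {\<alpha>'..\<beta>'}" "Rep_lc ` {\<alpha>'<..<\<beta>'} \<subseteq> Rep_lc ` {\<alpha>..\<beta>}"
    using I I' by blast+
  hence "{\<alpha><..<\<beta>} \<subseteq> {\<alpha>'..\<beta>'}" "{\<alpha>'<..<\<beta>'} \<subseteq> {\<alpha>..\<beta>}"
    by (simp_all add: inj_image_subset_iff[OF inj])
  hence "\<alpha> = \<alpha>'" "\<beta> = \<beta>'"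
    using I(3) I'(3) by (auto simp: greaterThanLessThan_subseteq_atLeastAtMost_iff intro: order.antisym)
  thus ?thesis using I I' by simp
qed

lemma lc_length_eq: "lc_interval a b S \<Longrightarrow> lc_length S = b - a"
  unfolding lc_length_def by (rule the_equality) (auto dest: lc_interval_endpoints_unique)

lemma is_lc_interval_Rep:
  assumes "is_lc_interval S"
  obtains \<alpha> \<beta> where "\<alpha> < \<beta>" "Rep_lc ` {\<alpha><..<\<beta>} \<subseteq> S" "S \<subseteq> Rep_lc ` {\<alpha>..\<beta>}"
    "lc_length S = Rep_lc (\<beta> - \<alpha>)"
proof -
  obtain a b where "lc_interval a b S" using assms by (auto simp: is_lc_interval_def)
  thus ?thesis using that lc_interval_Rep lc_length_eq by (metis Rep_lc_diff)
qed

lemma lc_interval_atLeastAtMost: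
  assumes "lo < hi"
  shows "is_lc_interval (Rep_lc ` {lo..hi})" "lc_length (Rep_lc ` {lo..hi}) = Rep_lc (hi - lo)"
proof -
  have "lc_interval (Rep_lc lo) (Rep_lc hi) (Rep_lc ` {lo..hi})"
    using assms unfolding lc_interval_def LC_eq_range_Rep_lc
    by (auto simp: lc_less_Rep lc_le_Rep)
  thus "is_lc_interval (Rep_lc ` {lo..hi})" "lc_length (Rep_lc ` {lo..hi}) = Rep_lc (hi - lo)"
    by (auto simp: is_lc_interval_def lc_length_eq Rep_lc_diff)
qed

definition is_cover :: "(rat \<Rightarrow> real) set \<Rightarrow> ('i \<Rightarrow> lc) \<Rightarrow> ('i \<Rightarrow> lc) \<Rightarrow> bool" where
  "is_cover X lo hi \<longleftrightarrow> (\<forall>i. lo i < hi i) \<and> X \<subseteq> (\<Union>i. Rep_lc ` {lo i..hi i}) \<and>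
     summable_fam UNIV (\<lambda>i. hi i - lo i)"

definition cover_lengths :: "(rat \<Rightarrow> real) set \<Rightarrow> lc set" where
  "cover_lengths X = {sum_fam UNIV (\<lambda>n. hi n - lo n) | lo hi :: nat \<Rightarrow> lc. is_cover X lo hi}"

lemma cover_sums_subset: "cover_sums X \<subseteq> Rep_lc ` cover_lengths X"
proof
  fix s assume "s \<in> cover_sums X"
  then obtain S where S: "lc_cover X S" "s = lc_suminf (\<lambda>n. lc_length (S n))"
    by (auto simp: cover_sums_def)
  have "\<forall>n. \<exists>lh. fst lh < snd lh \<and> S n \<subseteq> Rep_lc ` {fst lh..snd lh} \<and>
      lc_length (S n) = Rep_lc (snd lh - fst lh)"
    using S(1) is_lc_interval_Rep unfolding lc_cover_def by (metis fst_conv snd_conv)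
  then obtain lh where lh: "\<And>n. fst (lh n) < snd (lh n)"
    "\<And>n. S n \<subseteq> Rep_lc ` {fst (lh n)..snd (lh n)}"
    "\<And>n. lc_length (S n) = Rep_lc (snd (lh n) - fst (lh n))" by metis
  define lo where "lo n = fst (lh n)" for n
  define hi where "hi n = snd (lh n)" for n
  have len: "(\<lambda>n. lc_length (S n)) = (\<lambda>n. Rep_lc (hi n - lo n))"
    using lh(3) by (simp add: lo_def hi_def)
  have sf: "summable_fam UNIV (\<lambda>n. hi n - lo n)"
    using S(1) unfolding lc_cover_def len lc_summable_Rep_iff by blast
  have "is_cover X lo hi"
    unfolding is_cover_def using lh(1,2) S(1) sf unfolding lc_cover_def lo_def hi_def by blast
  moreover have "s = Rep_lc (sum_fam UNIV (\<lambda>n. hi n - lo n))"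
    using S(2) len lc_suminf_Rep[OF sf] by simp
  ultimately show "s \<in> Rep_lc ` cover_lengths X" by (auto simp: cover_lengths_def)
qed

lemma cover_sums_supset: "Rep_lc ` cover_lengths X \<subseteq> cover_sums X"
proof
  fix s assume "s \<in> Rep_lc ` cover_lengths X"
  then obtain lo hi :: "nat \<Rightarrow> lc" where c: "is_cover X lo hi"
    and s: "s = Rep_lc (sum_fam UNIV (\<lambda>n. hi n - lo n))"
    by (auto simp: cover_lengths_def)
  define S where "S n = Rep_lc ` {lo n..hi n}" for n
  have len: "(\<lambda>n. lc_length (S n)) = (\<lambda>n. Rep_lc (hi n - lo n))"
    using c lc_interval_atLeastAtMost by (simp add: S_def is_cover_def)
  have "lc_cover X S" unfolding lc_cover_def len lc_summable_Rep_iff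
    using c lc_interval_atLeastAtMost by (auto simp: is_cover_def S_def)
  moreover have "s = lc_suminf (\<lambda>n. lc_length (S n))"
    using len s lc_suminf_Rep c by (simp add: is_cover_def)
  ultimately show "s \<in> cover_sums X" by (auto simp: cover_sums_def)
qed

lemma cover_sums_eq: "cover_sums X = Rep_lc ` cover_lengths X"
  using cover_sums_subset cover_sums_supset by (rule equalityI)

lemma is_cover_cover_lengths:
  fixes lo hi :: "'i \<Rightarrow> lc"
  assumes "bij (e :: nat \<Rightarrow> 'i)" "is_cover X lo hi"
  shows "sum_fam UNIV (\<lambda>i. hi i - lo i) \<in> cover_lengths X"
proof -
  have sf: "summable_fam UNIV (\<lambda>i. hi i - lo i)" using assms(2) by (simp add: is_cover_def)
  have "X \<subseteq> (\<Union>n. Rep_lc ` {lo (e n)..hi (e n)})"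
  proof
    fix x assume "x \<in> X"
    then obtain i where "x \<in> Rep_lc ` {lo i..hi i}" using assms(2) unfolding is_cover_def by blast
    moreover have "e (inv e i) = i" using assms(1) by (simp add: bij_is_surj surj_f_inv_f)
    ultimately show "x \<in> (\<Union>n. Rep_lc ` {lo (e n)..hi (e n)})" by (metis UN_I UNIV_I)
  qed
  hence "is_cover X (lo \<circ> e) (hi \<circ> e)"
    using assms sum_fam_reindex(1)[OF assms(1) sf] by (simp add: is_cover_def)
  hence "sum_fam UNIV (\<lambda>n. (hi \<circ> e) n - (lo \<circ> e) n) \<in> cover_lengths X"
    unfolding cover_lengths_def by blast
  thus ?thesis using sum_fam_reindex(2)[OF assms(1) sf] by simp
qed

lemma sum_fam_Plus:
  assumes "summable_fam UNIV (f \<circ> Inl)" "summable_fam UNIV (f \<circ> Inr)"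
  shows "summable_fam UNIV f" "sum_fam UNIV f = sum_fam UNIV (f \<circ> Inl) + sum_fam UNIV (f \<circ> Inr)"
proof -
  have nv: "nonvanishing q f UNIV = Inl ` nonvanishing q (f \<circ> Inl) UNIV \<union> Inr ` nonvanishing q (f \<circ> Inr) UNIV"
    for q by (auto simp: nonvanishing_def image_iff) (metis sum.exhaust)
  show sf: "summable_fam UNIV f"
    using finite_nonvanishing[OF assms(1)] finite_nonvanishing[OF assms(2)]
    by (simp add: summable_fam_def nv)
  show "sum_fam UNIV f = sum_fam UNIV (f \<circ> Inl) + sum_fam UNIV (f \<circ> Inr)"
  proof (rule sum_fam_unique[symmetric, OF sf])
    fix q
    have "sum f (nonvanishing q f UNIV)
        = sum (f \<circ> Inl) (nonvanishing q (f \<circ> Inl) UNIV) + sum (f \<circ> Inr) (nonvanishing q (f \<circ> Inr) UNIV)"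
      unfolding nv using finite_nonvanishing[OF assms(1)] finite_nonvanishing[OF assms(2)]
      by (subst sum.union_disjoint) (auto simp: sum.reindex)
    hence "vanishes_upto q (sum_fam UNIV (f \<circ> Inl) + sum_fam UNIV (f \<circ> Inr) - sum f (nonvanishing q f UNIV))"
      using vanishes_upto_add[OF sum_fam_approx_nonvanishing[OF assms(1)]
          sum_fam_approx_nonvanishing[OF assms(2)], of q]
      by (simp add: algebra_simps)
    thus "\<exists>F. finite F \<and> F \<subseteq> UNIV \<and> nonvanishing q f UNIV \<subseteq> F \<and>
        vanishes_upto q (sum_fam UNIV (f \<circ> Inl) + sum_fam UNIV (f \<circ> Inr) - sum f F)"
      using finite_nonvanishing[OF sf, of q] by blast
  qed
qed

lemma cover_lengths_Un:
  assumes "x1 \<in> cover_lengths X1" "x2 \<in> cover_lengths X2" "B \<subseteq> X1 \<union> X2"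
  shows "x1 + x2 \<in> cover_lengths B"
proof -
  obtain lo1 hi1 :: "nat \<Rightarrow> lc" where c1: "is_cover X1 lo1 hi1"
    and x1: "x1 = sum_fam UNIV (\<lambda>n. hi1 n - lo1 n)"
    using assms(1) by (auto simp: cover_lengths_def)
  obtain lo2 hi2 :: "nat \<Rightarrow> lc" where c2: "is_cover X2 lo2 hi2"
    and x2: "x2 = sum_fam UNIV (\<lambda>n. hi2 n - lo2 n)"
    using assms(2) by (auto simp: cover_lengths_def)
  define lo where "lo = case_sum lo1 lo2"
  define hi where "hi = case_sum hi1 hi2"
  have sf: "summable_fam UNIV ((\<lambda>i. hi i - lo i) \<circ> Inl)" "summable_fam UNIV ((\<lambda>i. hi i - lo i) \<circ> Inr)"
    using c1 c2 by (simp_all add: is_cover_def lo_def hi_def comp_def)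
  have "B \<subseteq> (\<Union>i. Rep_lc ` {lo i..hi i})"
  proof
    fix x assume "x \<in> B"
    hence "(\<exists>n. x \<in> Rep_lc ` {lo (Inl n)..hi (Inl n)}) \<or> (\<exists>n. x \<in> Rep_lc ` {lo (Inr n)..hi (Inr n)})"
      using assms(3) c1 c2 unfolding is_cover_def lo_def hi_def by (simp; blast)
    thus "x \<in> (\<Union>i. Rep_lc ` {lo i..hi i})" by blast
  qed
  moreover have "lo i < hi i" for i
    using c1 c2 by (cases i) (simp_all add: is_cover_def lo_def hi_def)
  ultimately have "is_cover B lo hi"
    using sum_fam_Plus(1)[OF sf] by (simp add: is_cover_def)
  hence "sum_fam UNIV (\<lambda>i. hi i - lo i) \<in> cover_lengths B"
    using is_cover_cover_lengths[OF bij_sum_decode] by blast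
  thus ?thesis using sum_fam_Plus(2)[OF sf] by (simp add: x1 x2 lo_def hi_def comp_def)
qed

definition is_infimum :: "lc set \<Rightarrow> lc \<Rightarrow> bool" where
  "is_infimum T m \<longleftrightarrow> (\<forall>x\<in>T. m \<le> x) \<and> (\<forall>m'. (\<forall>x\<in>T. m' \<le> x) \<longrightarrow> m' \<le> m)"

lemma is_infimum_unique: "is_infimum T m \<Longrightarrow> is_infimum T m' \<Longrightarrow> m = m'"
  unfolding is_infimum_def by (meson order_antisym)

lemma lc_is_inf_Rep_iff: "lc_is_inf (Rep_lc ` T) m \<longleftrightarrow> (\<exists>\<mu>. m = Rep_lc \<mu> \<and> is_infimum T \<mu>)"
  unfolding lc_is_inf_def is_infimum_def LC_eq_range_Rep_lc by (auto simp: lc_le_Rep)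

lemma outer_measurable_iff:
  "outer_measurable X \<longleftrightarrow> X \<subseteq> LC \<and> (\<exists>\<mu>. is_infimum (cover_lengths X) \<mu>)"
  unfolding outer_measurable_def cover_sums_eq lc_is_inf_Rep_iff by blast

lemma outer_measure_eq: "is_infimum (cover_lengths X) \<mu> \<Longrightarrow> outer_measure X = Rep_lc \<mu>"
  unfolding outer_measure_def cover_sums_eq lc_is_inf_Rep_iff
  by (rule the_equality) (auto dest: is_infimum_unique)

section \<open>Covers of disjoint intervals\<close>

definition overlap :: "lc \<Rightarrow> lc \<Rightarrow> lc \<Rightarrow> lc \<Rightarrow> lc" where
  "overlap u v a b = max 0 (min v b - max u a)"

lemma overlap_nonneg: "0 \<le> overlap u v a b"
  by (simp add: overlap_def)

lemma overlap_commute: "overlap u v a b = overlap a b u v"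
  by (simp add: overlap_def min.commute max.commute)

lemma overlap_le_length: "a \<le> b \<Longrightarrow> overlap u v a b \<le> b - a"
  unfolding overlap_def by (rule max.boundedI) (simp, rule diff_mono, simp_all)

lemma overlap_split:
  "a \<le> b \<Longrightarrow> max 0 (min a v - u) + max 0 (v - max b u) + overlap u v a b = max 0 (v - u)"
  unfolding overlap_def by (auto simp: min_def max_def algebra_simps)

lemma overlap_add_le:
  "c \<le> c' \<Longrightarrow> c \<le> v \<Longrightarrow> u \<le> c' \<Longrightarrow> overlap u c a b + overlap c' v a b \<le> overlap u v a b"
  unfolding overlap_def by (auto simp: min_def max_def algebra_simps)

lemma overlap_le_outside:
  "b' \<le> a \<or> b \<le> a' \<Longrightarrow> a \<le> b \<Longrightarrow> a' \<le> b' \<Longrightarrow>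
    overlap u v a' b' \<le> overlap u (min a v) a' b' + overlap (max b u) v a' b'"
  unfolding overlap_def by (auto simp: min_def max_def algebra_simps)

definition small_upto :: "rat \<Rightarrow> lc \<Rightarrow> bool" where
  "small_upto q x \<longleftrightarrow> (\<exists>w. vanishes_upto q w \<and> x \<le> w)"

lemma small_upto_le: "x \<le> y \<Longrightarrow> small_upto q y \<Longrightarrow> small_upto q x"
  unfolding small_upto_def by (meson order_trans)

lemma small_upto_add: "small_upto q x \<Longrightarrow> small_upto q y \<Longrightarrow> small_upto q (x + y)"
  unfolding small_upto_def by (meson add_mono vanishes_upto_add)

lemma small_upto_sum: "(\<And>i. i \<in> F \<Longrightarrow> small_upto q (f i)) \<Longrightarrow> small_upto q (sum f F)"
  by (induction F rule: infinite_finite_induct)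
    (auto simp: small_upto_add, auto simp: small_upto_def intro: exI[of _ 0])

lemma nonpos_if_small_upto: "(\<And>q. small_upto q x) \<Longrightarrow> x \<le> 0"
  by (rule le_by_vanishing) (simp add: small_upto_def)

text \<open>This replaces the Heine-Borel theorem, which fails in the Levi-Civita field: the uncountably
  many points \<open>u + r \<epsilon>\<^sup>q\<close> (\<open>0 < r < t\<close>) must lie in pairwise different covering intervals.\<close>

lemma small_upto_if_covered_by_vanishing:
  fixes \<alpha> \<beta> :: "'i \<Rightarrow> lc"
  assumes "countable S" "\<And>k. k \<in> S \<Longrightarrow> vanishes_upto q (\<beta> k - \<alpha> k)"
    and "\<And>x. u < x \<Longrightarrow> x < v \<Longrightarrow> \<exists>k\<in>S. \<alpha> k \<le> x \<and> x \<le> \<beta> k"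
  shows "small_upto q (max 0 (v - u))"
proof (rule ccontr)
  assume small: "\<not> small_upto q (max 0 (v - u))"
  have pos: "0 < v - u"
  proof (rule ccontr)
    assume "\<not> 0 < v - u"
    hence "max 0 (v - u) \<le> 0" by simp
    thus False using small unfolding small_upto_def by (metis vanishes_upto_zero)
  qed
  hence "\<not> vanishes_upto q (v - u)" using small by (auto simp: small_upto_def)
  then obtain t where t: "0 < t" "monomial q t < v - u" using monomial_below[OF pos] by blast
  define P where "P r = u + monomial q r" for r
  have "u < P r \<and> P r < v" if "r \<in> {0<..<t}" for r
  proof
    show "u < P r" using that monomial_pos[of r q] by (simp add: P_def)
    have "P r < P t" using that monomial_less[of r t q] by (simp add: P_def)
    also have "P t < v" using t(2) by (simp add: P_def less_diff_eq add.commute)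
    finally show "P r < v" .
  qed
  hence "\<forall>r\<in>{0<..<t}. \<exists>k\<in>S. \<alpha> k \<le> P r \<and> P r \<le> \<beta> k" using assms(3) by blast
  then obtain K where K: "\<And>r. r \<in> {0<..<t} \<Longrightarrow> K r \<in> S \<and> \<alpha> (K r) \<le> P r \<and> P r \<le> \<beta> (K r)"
    by metis
  have "inj_on K {0<..<t}"
  proof (rule linorder_inj_onI')
    fix s s' assume s: "s \<in> {0<..<t}" "s' \<in> {0<..<t}" "s < s'"
    show "K s \<noteq> K s'"
    proof
      assume eq: "K s = K s'"
      have "monomial q (s' - s) = P s' - P s" by (simp add: P_def monomial_diff)
      also have "\<dots> \<le> \<beta> (K s) - \<alpha> (K s)"
        using K[OF s(1)] K[OF s(2)] eq diff_mono[of "P s'" "\<beta> (K s)" "\<alpha> (K s)" "P s"] by simp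
      finally have "monomial q (s' - s) \<le> \<beta> (K s) - \<alpha> (K s)" .
      moreover have "\<beta> (K s) - \<alpha> (K s) < monomial q (s' - s)"
        using assms(2) K[OF s(1)] s(3) by (intro vanishes_upto_less_monomial) auto
      ultimately show False using leD by blast
    qed
  qed
  moreover have "countable (K ` {0<..<t})"
    using K by (intro countable_subset[OF _ assms(1)]) blast
  ultimately have "countable {0<..<t}" using countable_image_inj_on by blast
  thus False using uncountable_open_interval[of 0 t] t(1) by simp
qed

lemma small_upto_uncovered_part:
  fixes \<alpha> \<beta> :: "'i \<Rightarrow> lc"
  assumes "finite F" "countable S" "\<And>k. k \<in> S \<Longrightarrow> vanishes_upto q (\<beta> k - \<alpha> k)" "\<And>k. \<alpha> k \<le> \<beta> k"
    and "\<And>x. u < x \<Longrightarrow> x < v \<Longrightarrow> \<exists>k\<in>F \<union> S. \<alpha> k \<le> x \<and> x \<le> \<beta> k"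
  shows "small_upto q (max 0 (v - u) - (\<Sum>k\<in>F. overlap u v (\<alpha> k) (\<beta> k)))"
  using assms(1,5)
proof (induction F arbitrary: u v rule: finite_induct)
  case empty
  thus ?case using small_upto_if_covered_by_vanishing[OF assms(2,3)] by simp
next
  case (insert j F)
  define c where "c = min (\<alpha> j) v"
  define c' where "c' = max (\<beta> j) u"
  have "c \<le> c'" "c \<le> v" "u \<le> c'"
    using assms(4)[of j] by (auto simp: c_def c'_def min_def max_def)
  have left: "small_upto q (max 0 (c - u) - (\<Sum>k\<in>F. overlap u c (\<alpha> k) (\<beta> k)))"
    by (rule insert.IH) (use insert.prems in \<open>fastforce simp: c_def\<close>)
  have right: "small_upto q (max 0 (v - c') - (\<Sum>k\<in>F. overlap c' v (\<alpha> k) (\<beta> k)))"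
    by (rule insert.IH) (use insert.prems in \<open>fastforce simp: c'_def\<close>)
  have "max 0 (v - u) = max 0 (c - u) + max 0 (v - c') + overlap u v (\<alpha> j) (\<beta> j)"
    using overlap_split[OF assms(4)[of j], of v u] by (simp add: c_def c'_def)
  moreover have "(\<Sum>k\<in>F. overlap u c (\<alpha> k) (\<beta> k)) + (\<Sum>k\<in>F. overlap c' v (\<alpha> k) (\<beta> k))
      \<le> (\<Sum>k\<in>F. overlap u v (\<alpha> k) (\<beta> k))"
    unfolding sum.distrib[symmetric] using \<open>c \<le> c'\<close> \<open>c \<le> v\<close> \<open>u \<le> c'\<close>
    by (intro sum_mono overlap_add_le)
  ultimately have "max 0 (v - u) - (\<Sum>k\<in>insert j F. overlap u v (\<alpha> k) (\<beta> k))
      \<le> (max 0 (c - u) - (\<Sum>k\<in>F. overlap u c (\<alpha> k) (\<beta> k)))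
        + (max 0 (v - c') - (\<Sum>k\<in>F. overlap c' v (\<alpha> k) (\<beta> k)))"
    using insert.hyps by (simp add: algebra_simps)
  thus ?case using small_upto_le small_upto_add[OF left right] by blast
qed

definition nonoverlapping :: "('i \<Rightarrow> lc) \<Rightarrow> ('i \<Rightarrow> lc) \<Rightarrow> bool" where
  "nonoverlapping a b \<longleftrightarrow> (\<forall>n m. n \<noteq> m \<longrightarrow> b n \<le> a m \<or> b m \<le> a n)"

text \<open>The pieces into which the open intervals \<open>(a, b)\<close> of the list cut \<open>[lo, hi]\<close>; pieces with
  \<open>l > h\<close> are empty.\<close>

fun gaps :: "lc \<Rightarrow> lc \<Rightarrow> (lc \<times> lc) list \<Rightarrow> (lc \<times> lc) list" where
  "gaps lo hi [] = [(lo, hi)]"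
| "gaps lo hi ((a, b) # js) = gaps lo (min hi a) js @ gaps (max lo b) hi js"

definition piece_length :: "lc \<times> lc \<Rightarrow> lc" where
  "piece_length p = max 0 (snd p - fst p)"

definition total_length :: "(lc \<times> lc) list \<Rightarrow> lc" where
  "total_length ps = sum_list (map piece_length ps)"

lemma total_length_nonneg: "0 \<le> total_length ps"
  unfolding total_length_def piece_length_def by (induction ps) auto

lemma gaps_cover:
  "lo \<le> x \<Longrightarrow> x \<le> hi \<Longrightarrow> (\<forall>(a, b)\<in>set js. \<not> (a < x \<and> x < b)) \<Longrightarrow>
    \<exists>(l, h)\<in>set (gaps lo hi js). l \<le> x \<and> x \<le> h"
proof (induction js arbitrary: lo hi)
  case Nil thus ?case by simp
next
  case (Cons ab js)
  obtain a b where ab: "ab = (a, b)" by (cases ab)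
  show ?case
  proof (cases "x \<le> a")
    case True
    thus ?thesis using Cons.IH[of lo "min hi a"] Cons.prems by (auto simp: ab)
  next
    case False
    hence "b \<le> x" using Cons.prems(3) by (auto simp: ab)
    thus ?thesis using Cons.IH[of "max lo b" hi] Cons.prems by (auto simp: ab)
  qed
qed

lemma gaps_bounds: "(l, h) \<in> set (gaps lo hi js) \<Longrightarrow> lo \<le> l \<and> h \<le> hi"
proof (induction js arbitrary: lo hi)
  case Nil thus ?case by simp
next
  case (Cons ab js)
  thus ?case by (cases ab) (fastforce dest: Cons.IH)
qed

lemma gaps_total_length:
  fixes a b :: "'i \<Rightarrow> lc"
  assumes "\<And>n. a n \<le> b n" "nonoverlapping a b" "distinct ns"
  shows "total_length (gaps lo hi (map (\<lambda>n. (a n, b n)) ns))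
      + (\<Sum>n\<in>set ns. overlap lo hi (a n) (b n)) \<le> max 0 (hi - lo)"
  using assms(3)
proof (induction ns arbitrary: lo hi)
  case Nil thus ?case by (simp add: total_length_def piece_length_def)
next
  case (Cons n ns)
  define c where "c = min (a n) hi"
  define c' where "c' = max (b n) lo"
  define S1 where "S1 = total_length (gaps lo c (map (\<lambda>n. (a n, b n)) ns))"
  define S2 where "S2 = total_length (gaps c' hi (map (\<lambda>n. (a n, b n)) ns))"
  have dn: "distinct ns" "n \<notin> set ns" using Cons.prems by auto
  have "overlap lo hi (a m) (b m) \<le> overlap lo c (a m) (b m) + overlap c' hi (a m) (b m)"
    if "m \<in> set ns" for m
  proof -
    have "m \<noteq> n" using that dn(2) by blast
    hence "b m \<le> a n \<or> b n \<le> a m" using assms(2) unfolding nonoverlapping_def by blast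
    thus ?thesis unfolding c_def c'_def by (rule overlap_le_outside[OF _ assms(1) assms(1)])
  qed
  hence "S1 + S2 + (overlap lo hi (a n) (b n) + (\<Sum>m\<in>set ns. overlap lo hi (a m) (b m)))
      \<le> S1 + S2 + (overlap lo hi (a n) (b n)
        + ((\<Sum>m\<in>set ns. overlap lo c (a m) (b m)) + (\<Sum>m\<in>set ns. overlap c' hi (a m) (b m))))"
    unfolding sum.distrib[symmetric] by (intro add_left_mono sum_mono)
  also have "\<dots> = (S1 + (\<Sum>m\<in>set ns. overlap lo c (a m) (b m)))
      + (S2 + (\<Sum>m\<in>set ns. overlap c' hi (a m) (b m))) + overlap lo hi (a n) (b n)"
    by (simp add: algebra_simps)
  also have "\<dots> \<le> max 0 (c - lo) + max 0 (hi - c') + overlap lo hi (a n) (b n)"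
    unfolding S1_def S2_def by (intro add_right_mono add_mono Cons.IH dn(1))
  also have "\<dots> = max 0 (hi - lo)"
    unfolding c_def c'_def by (rule overlap_split[OF assms(1)])
  finally show ?case
    using dn(2) by (simp add: S1_def S2_def c_def c'_def total_length_def min.commute max.commute)
qed

lemma sum_overlap_le_length:
  fixes a b :: "'i \<Rightarrow> lc"
  assumes "\<And>n. a n \<le> b n" "nonoverlapping a b" "finite N"
  shows "(\<Sum>n\<in>N. overlap u v (a n) (b n)) \<le> max 0 (v - u)"
proof -
  obtain ns where ns: "set ns = N" "distinct ns" using finite_distinct_list[OF assms(3)] by blast
  have "(\<Sum>n\<in>N. overlap u v (a n) (b n))
      \<le> total_length (gaps u v (map (\<lambda>n. (a n, b n)) ns)) + (\<Sum>n\<in>N. overlap u v (a n) (b n))"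
    using total_length_nonneg by simp
  also have "\<dots> \<le> max 0 (v - u)" using gaps_total_length[OF assms(1,2) ns(2)] ns(1) by simp
  finally show ?thesis .
qed

lemma sum_overlaps_le_sum_lengths:
  fixes a b :: "'i \<Rightarrow> lc" and lo hi :: "'k \<Rightarrow> lc"
  assumes "\<And>n. a n \<le> b n" "nonoverlapping a b" "\<And>k. lo k \<le> hi k" "finite N"
  shows "(\<Sum>n\<in>N. \<Sum>k\<in>F. overlap (a n) (b n) (lo k) (hi k)) \<le> (\<Sum>k\<in>F. hi k - lo k)"
proof -
  have "(\<Sum>n\<in>N. \<Sum>k\<in>F. overlap (a n) (b n) (lo k) (hi k))
      = (\<Sum>k\<in>F. \<Sum>n\<in>N. overlap (lo k) (hi k) (a n) (b n))"
    by (subst sum.swap) (simp add: overlap_commute)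
  also have "\<dots> \<le> (\<Sum>k\<in>F. max 0 (hi k - lo k))"
    using assms by (intro sum_mono sum_overlap_le_length)
  also have "\<dots> = (\<Sum>k\<in>F. hi k - lo k)"
    using assms(3) by (intro sum.cong) simp_all
  finally show ?thesis .
qed

lemma sum_lengths_le_cover_length:
  fixes a b lo hi :: "nat \<Rightarrow> lc"
  assumes ab: "\<And>n. a n < b n" "nonoverlapping a b"
    and covered: "\<And>n x. a n < x \<Longrightarrow> x < b n \<Longrightarrow> \<exists>k. lo k \<le> x \<and> x \<le> hi k"
    and lo_hi: "\<And>k. lo k < hi k" "summable_fam UNIV (\<lambda>k. hi k - lo k)"
  shows "(\<Sum>n<N. b n - a n) \<le> sum_fam UNIV (\<lambda>k. hi k - lo k)"
proof -
  have lo_le_hi: "lo k \<le> hi k" for k using lo_hi(1) less_imp_le by blast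
  have "small_upto q ((\<Sum>n<N. b n - a n) - sum_fam UNIV (\<lambda>k. hi k - lo k))" for q
  proof -
    define F where "F = nonvanishing q (\<lambda>k. hi k - lo k) UNIV"
    have "finite F" using finite_nonvanishing[OF lo_hi(2)] by (simp add: F_def)
    have "small_upto q ((b n - a n) - (\<Sum>k\<in>F. overlap (a n) (b n) (lo k) (hi k)))" for n
    proof -
      have "small_upto q (max 0 (b n - a n) - (\<Sum>k\<in>F. overlap (a n) (b n) (lo k) (hi k)))"
      proof (rule small_upto_uncovered_part[where S="- F"])
        show "vanishes_upto q (hi k - lo k)" if "k \<in> - F" for k
          using that by (simp add: F_def nonvanishing_def)
        show "\<exists>k\<in>F \<union> - F. lo k \<le> x \<and> x \<le> hi k" if "a n < x" "x < b n" for x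
          using covered[OF that] by blast
      qed (simp_all add: \<open>finite F\<close> lo_le_hi)
      thus ?thesis using less_imp_le[OF ab(1)[of n]] by (simp add: max_def)
    qed
    hence "small_upto q (\<Sum>n<N. (b n - a n) - (\<Sum>k\<in>F. overlap (a n) (b n) (lo k) (hi k)))"
      by (intro small_upto_sum)
    hence "small_upto q ((\<Sum>n<N. b n - a n) - (\<Sum>n<N. \<Sum>k\<in>F. overlap (a n) (b n) (lo k) (hi k)))"
      by (simp only: sum_subtractf)
    moreover have "(\<Sum>n<N. \<Sum>k\<in>F. overlap (a n) (b n) (lo k) (hi k)) \<le> (\<Sum>k\<in>F. hi k - lo k)"
      using ab lo_le_hi by (intro sum_overlaps_le_sum_lengths) (simp_all add: less_imp_le)
    moreover have "(\<Sum>k\<in>F. hi k - lo k) \<le> sum_fam UNIV (\<lambda>k. hi k - lo k)"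
      using \<open>finite F\<close> lo_le_hi by (intro sum_le_sum_fam[OF lo_hi(2)]) auto
    ultimately show ?thesis by (auto elim!: small_upto_le[rotated] intro: diff_left_mono order_trans)
  qed
  hence "(\<Sum>n<N. b n - a n) - sum_fam UNIV (\<lambda>k. hi k - lo k) \<le> 0" by (rule nonpos_if_small_upto)
  thus ?thesis by simp
qed

section \<open>Existence of infima\<close>

lemma lc_complete:
  fixes u :: "nat \<Rightarrow> lc"
  assumes "\<And>i j. i \<le> j \<Longrightarrow> vanishes_upto (of_nat i) (u j - u i)"
  obtains m where "\<And>i. vanishes_upto (of_nat i) (m - u i)"
proof -
  have agree: "Rep_lc (u i) p = Rep_lc (u j) p" if "p \<le> of_nat i" "p \<le> of_nat j" for i j p
  proof (cases "i \<le> j")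
    case True
    thus ?thesis using assms[OF True] that(1) by (simp add: vanishes_upto_def Rep_lc_diff)
  next
    case False
    thus ?thesis using assms[of j i] that(2) by (simp add: vanishes_upto_def Rep_lc_diff)
  qed
  define mr where "mr p = Rep_lc (u (nat \<lceil>p\<rceil>)) p" for p
  have mr_eq: "mr p = Rep_lc (u i) p" if "p \<le> of_nat i" for p i
    unfolding mr_def using agree[OF of_nat_ceiling that] .
  have "finite {p. p < r \<and> mr p \<noteq> 0}" for r
  proof (rule finite_subset)
    show "{p. p < r \<and> mr p \<noteq> 0} \<subseteq> {p. p < r \<and> Rep_lc (u (nat \<lceil>r\<rceil>)) p \<noteq> 0}"
      using mr_eq[of _ "nat \<lceil>r\<rceil>"] of_nat_ceiling[of r] by force
    show "finite {p. p < r \<and> Rep_lc (u (nat \<lceil>r\<rceil>)) p \<noteq> 0}"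
      using Rep_lc[of "u (nat \<lceil>r\<rceil>)"] by (simp add: LC_def)
  qed
  hence "mr \<in> LC" by (simp add: LC_def)
  hence "Rep_lc (Abs_lc mr) = mr" by (rule Abs_lc_inverse)
  hence "vanishes_upto (of_nat i) (Abs_lc mr - u i)" for i
    by (simp add: vanishes_upto_def Rep_lc_diff mr_eq)
  thus ?thesis using that by blast
qed

lemma is_infimum_of_approximations:
  fixes u v w :: "nat \<Rightarrow> lc"
  assumes "\<And>n. u n \<in> X" "\<And>n x. x \<in> X \<Longrightarrow> v n \<le> x"
    and "\<And>n. u n - v n \<le> w n" "\<And>n. vanishes_upto (of_nat n) (w n)"
  obtains m where "is_infimum X m"
proof -
  have "vanishes_upto (of_nat i) (u j - u i)" if "i \<le> j" for i j
  proof (rule vanishes_upto_between)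
    have "u i \<le> v i + w i" using assms(3)[of i] by (simp add: algebra_simps)
    also have "\<dots> \<le> u j + w i" using assms(2)[OF assms(1), of i j] by simp
    finally show "- w i \<le> u j - u i" by (simp add: algebra_simps)
    have "u j \<le> v j + w j" using assms(3)[of j] by (simp add: algebra_simps)
    also have "\<dots> \<le> u i + w j" using assms(2)[OF assms(1), of j i] by simp
    finally show "u j - u i \<le> w j" by (simp add: algebra_simps)
    show "vanishes_upto (of_nat i) (w i)" by (rule assms(4))
    show "vanishes_upto (of_nat i) (w j)" by (rule vanishes_upto_mono[OF assms(4)[of j]]) (use that in simp)
  qed
  then obtain m where m: "\<And>i. vanishes_upto (of_nat i) (m - u i)" using lc_complete by blast
  have "m \<le> x" if "x \<in> X" for x
  proof (rule le_by_vanishing)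
    fix q :: rat
    define i where "i = nat \<lceil>q\<rceil>"
    have "q \<le> of_nat i" by (simp add: i_def of_nat_ceiling)
    hence vanish: "vanishes_upto q ((m - u i) + w i)"
      using vanishes_upto_mono[OF vanishes_upto_add[OF m assms(4)]] by blast
    have "u i \<le> v i + w i" using assms(3)[of i] by (simp add: algebra_simps)
    also have "\<dots> \<le> x + w i" using assms(2)[OF that, of i] by simp
    finally have "m \<le> x + ((m - u i) + w i)" by (simp add: algebra_simps)
    thus "\<exists>w. vanishes_upto q w \<and> m \<le> x + w" using vanish by blast
  qed
  moreover have "m' \<le> m" if "\<forall>x\<in>X. m' \<le> x" for m'
  proof (rule le_by_vanishing)
    fix q :: rat
    define i where "i = nat \<lceil>q\<rceil>"
    have "q \<le> of_nat i" by (simp add: i_def of_nat_ceiling)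
    hence "vanishes_upto q (u i - m)"
      using vanishes_upto_mono[OF m[of i]] by (metis minus_diff_eq vanishes_upto_uminus_iff)
    moreover have "m' \<le> m + (u i - m)" using that assms(1)[of i] by simp
    ultimately show "\<exists>w. vanishes_upto q w \<and> m' \<le> m + w" by blast
  qed
  ultimately show ?thesis using that by (auto simp: is_infimum_def)
qed

lemma is_infimum_exists:
  assumes lower: "\<And>x1 x2. x1 \<in> X1 \<Longrightarrow> x2 \<in> X2 \<Longrightarrow> M \<le> x1 + x2"
    and approx: "\<And>q. \<exists>x1\<in>X1. \<exists>x2\<in>X2. \<exists>w. vanishes_upto q w \<and> x1 + x2 \<le> M + w"
  obtains m where "is_infimum X1 m"
proof -
  have "\<forall>n::nat. \<exists>x1 x2 w. x1 \<in> X1 \<and> x2 \<in> X2 \<and> vanishes_upto (of_nat n) w \<and> x1 + x2 \<le> M + w"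
    using approx by blast
  then obtain u y w where uyw: "\<And>n. u n \<in> X1" "\<And>n. y n \<in> X2" "\<And>n. vanishes_upto (of_nat n) (w n)"
    "\<And>n. u n + y n \<le> M + w n"
    by metis
  show ?thesis
  proof (rule is_infimum_of_approximations[of u X1 "\<lambda>n. M - y n" w])
    show "M - y n \<le> x" if "x \<in> X1" for n x
      using lower[OF that uyw(2)[of n]] by (simp add: algebra_simps)
    show "u n - (M - y n) \<le> w n" for n
      using uyw(4)[of n] by (simp add: algebra_simps)
  qed (use uyw that in auto)
qed

lemma is_infimum_split:
  assumes lower: "\<And>x1 x2. x1 \<in> X1 \<Longrightarrow> x2 \<in> X2 \<Longrightarrow> M \<le> x1 + x2"
    and approx: "\<And>q. \<exists>x1\<in>X1. \<exists>x2\<in>X2. \<exists>w. vanishes_upto q w \<and> x1 + x2 \<le> M + w"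
  obtains m1 m2 where "is_infimum X1 m1" "is_infimum X2 m2" "M = m1 + m2"
proof -
  obtain m1 where m1: "is_infimum X1 m1" using is_infimum_exists[OF lower approx] by blast
  obtain m2 where m2: "is_infimum X2 m2"
    using is_infimum_exists[of X2 X1 M] lower approx by (metis add.commute)
  have "M - m1 \<le> x2" if "x2 \<in> X2" for x2
  proof -
    have "\<forall>x\<in>X1. M - x2 \<le> x" using lower that by (simp add: diff_le_eq add.commute)
    hence "M - x2 \<le> m1" using m1 by (simp add: is_infimum_def)
    thus ?thesis by (simp add: algebra_simps)
  qed
  hence "M - m1 \<le> m2" using m2 by (simp add: is_infimum_def)
  moreover have "m1 + m2 \<le> M"
  proof (rule le_by_vanishing)
    fix q
    obtain x1 x2 w where x: "x1 \<in> X1" "x2 \<in> X2" "vanishes_upto q w" "x1 + x2 \<le> M + w"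
      using approx by blast
    have "m1 + m2 \<le> x1 + x2" using m1 m2 x(1,2) by (simp add: is_infimum_def add_mono)
    thus "\<exists>w. vanishes_upto q w \<and> m1 + m2 \<le> M + w" using x(3,4) order_trans by blast
  qed
  ultimately show ?thesis using that m1 m2 by (simp add: algebra_simps)
qed

section \<open>Splitting covers\<close>

lemma fattened_cover_lengths:
  fixes c len d :: "'i \<Rightarrow> lc"
  assumes "bij (e :: nat \<Rightarrow> 'i)"
    and "X \<subseteq> (\<Union>i. Rep_lc ` {c i..c i + len i})" "\<And>i. 0 \<le> len i" "summable_fam UNIV len"
    and "\<And>i. 0 < d i" "summable_fam UNIV d"
  shows "sum_fam UNIV len + sum_fam UNIV (\<lambda>i. d i + d i) \<in> cover_lengths X"
proof -
  define lo where "lo i = c i - d i" for i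
  define hi where "hi i = c i + len i + d i" for i
  have len: "hi i - lo i = len i + (d i + d i)" for i by (simp add: lo_def hi_def algebra_simps)
  have sf: "summable_fam UNIV (\<lambda>i. len i + (d i + d i))"
    using assms(4,6) by (intro summable_fam_add)
  have "0 < hi i - lo i" for i
    using assms(3,5)[of i] by (simp add: len add_nonneg_pos)
  hence "lo i < hi i" for i by simp
  moreover have "lo i \<le> c i" "c i + len i \<le> hi i" for i
    using less_imp_le[OF assms(5)[of i]] by (simp_all add: lo_def hi_def)
  hence "{c i..c i + len i} \<subseteq> {lo i..hi i}" for i by auto
  hence "(\<Union>i. Rep_lc ` {c i..c i + len i}) \<subseteq> (\<Union>i. Rep_lc ` {lo i..hi i})"
    by (intro UN_mono image_mono subset_refl)
  hence "X \<subseteq> (\<Union>i. Rep_lc ` {lo i..hi i})" using assms(2) by (rule order_trans[rotated])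
  ultimately have "is_cover X lo hi" using sf by (simp add: is_cover_def len)
  hence "sum_fam UNIV (\<lambda>i. hi i - lo i) \<in> cover_lengths X"
    by (rule is_cover_cover_lengths[OF assms(1)])
  thus ?thesis using sum_fam_add[OF assms(4) summable_fam_add[OF assms(6) assms(6)]] by (simp add: len)
qed

lemma slack_family:
  obtains d :: "nat \<times> nat \<Rightarrow> lc" where
    "\<And>i. 0 < d i" "\<And>i. vanishes_upto q (d i)" "summable_fam UNIV d"
proof
  define d where "d i = monomial (q + 1 + of_nat (prod_encode i)) 1" for i
  show "0 < d i" for i by (simp add: d_def monomial_pos)
  show "vanishes_upto q (d i)" for i unfolding d_def by (rule vanishes_upto_monomial) simp
  show "summable_fam UNIV d" unfolding summable_fam_def
  proof
    fix p
    have "nonvanishing p d UNIV \<subseteq> prod_decode ` {..nat \<lceil>p - q\<rceil>}"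
    proof
      fix i assume "i \<in> nonvanishing p d UNIV"
      hence "\<not> p < q + 1 + of_nat (prod_encode i)"
        using vanishes_upto_monomial by (auto simp: nonvanishing_def d_def)
      hence "of_nat (prod_encode i) \<le> p - q" by simp
      hence "int (prod_encode i) \<le> \<lceil>p - q\<rceil>" by (metis ceiling_mono ceiling_of_nat)
      hence "prod_encode i \<le> nat \<lceil>p - q\<rceil>" by (simp add: le_nat_iff)
      thus "i \<in> prod_decode ` {..nat \<lceil>p - q\<rceil>}" by (metis atMost_iff image_eqI prod_encode_inverse)
    qed
    thus "finite (nonvanishing p d UNIV)" using finite_subset by blast
  qed
qed

lemma summable_fam_overlaps:
  fixes a b lo hi :: "nat \<Rightarrow> lc"
  assumes "\<And>n. a n \<le> b n" "\<And>k. lo k \<le> hi k"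
    and "summable_fam UNIV (\<lambda>n. b n - a n)" "summable_fam UNIV (\<lambda>k. hi k - lo k)"
  shows "summable_fam UNIV (\<lambda>(k, n). overlap (lo k) (hi k) (a n) (b n))"
proof (rule summable_fam_prod[OF assms(4,3)], unfold prod.case)
  fix k n
  have "overlap (lo k) (hi k) (a n) (b n) \<le> hi k - lo k"
    by (subst overlap_commute) (rule overlap_le_length[OF assms(2)])
  thus "0 \<le> overlap (lo k) (hi k) (a n) (b n) \<and> overlap (lo k) (hi k) (a n) (b n) \<le> hi k - lo k \<and>
      overlap (lo k) (hi k) (a n) (b n) \<le> b n - a n"
    using overlap_nonneg overlap_le_length[OF assms(1)] by blast
qed

lemma cover_lengths_Int:
  fixes a b lo hi :: "nat \<Rightarrow> lc" and d :: "nat \<times> nat \<Rightarrow> lc"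
  assumes X: "is_cover X a b" and Y: "is_cover Y lo hi"
    and d: "\<And>i. 0 < d i" "summable_fam UNIV d"
  shows "summable_fam UNIV (\<lambda>(k, n). overlap (lo k) (hi k) (a n) (b n))"
    "sum_fam UNIV (\<lambda>(k, n). overlap (lo k) (hi k) (a n) (b n)) + sum_fam UNIV (\<lambda>i. d i + d i)
      \<in> cover_lengths (X \<inter> Y)"
proof -
  define len where "len = (\<lambda>(k, n). overlap (lo k) (hi k) (a n) (b n))"
  define c where "c = (\<lambda>(k, n). max (lo k) (a n))"
  show sf: "summable_fam UNIV (\<lambda>(k, n). overlap (lo k) (hi k) (a n) (b n))"
    using X Y by (intro summable_fam_overlaps) (simp_all add: is_cover_def less_imp_le)
  have "X \<inter> Y \<subseteq> (\<Union>i. Rep_lc ` {c i..c i + len i})"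
  proof
    fix x assume "x \<in> X \<inter> Y"
    then obtain n k where "x \<in> Rep_lc ` {a n..b n}" "x \<in> Rep_lc ` {lo k..hi k}"
      using X Y unfolding is_cover_def by blast
    then obtain z where z: "x = Rep_lc z" "a n \<le> z" "z \<le> b n" "lo k \<le> z" "z \<le> hi k"
      by (auto simp: Rep_lc_inject)
    have "z \<le> c (k, n) + (min (hi k) (b n) - c (k, n))" using z by simp
    also have "\<dots> \<le> c (k, n) + len (k, n)"
      unfolding len_def c_def overlap_def by (intro add_left_mono) simp
    finally have "z \<in> {c (k, n)..c (k, n) + len (k, n)}" using z by (simp add: c_def)
    thus "x \<in> (\<Union>i. Rep_lc ` {c i..c i + len i})" using z(1) by blast
  qed
  thus "sum_fam UNIV (\<lambda>(k, n). overlap (lo k) (hi k) (a n) (b n)) + sum_fam UNIV (\<lambda>i. d i + d i)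
      \<in> cover_lengths (X \<inter> Y)"
    using fattened_cover_lengths[OF bij_prod_decode _ _ _ d] sf overlap_nonneg
    unfolding len_def by (simp add: case_prod_beta)
qed

definition gap_piece :: "(nat \<Rightarrow> lc) \<Rightarrow> (nat \<Rightarrow> lc) \<Rightarrow> (lc \<times> lc) list \<Rightarrow> nat \<times> nat \<Rightarrow> lc \<times> lc" where
  "gap_piece lo hi js = (\<lambda>(k, i). nth_default (0, 0) (gaps (lo k) (hi k) js) i)"

lemma piece_length_gap_piece_beyond:
  "length (gaps (lo k) (hi k) js) \<le> i \<Longrightarrow> piece_length (gap_piece lo hi js (k, i)) = 0"
  by (simp add: gap_piece_def nth_default_def piece_length_def)

lemma piece_length_gap_piece_le:
  assumes "lo k \<le> hi k"
  shows "piece_length (gap_piece lo hi js (k, i)) \<le> hi k - lo k"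
proof (cases "i < length (gaps (lo k) (hi k) js)")
  case True
  obtain l h where lh: "gap_piece lo hi js (k, i) = (l, h)" by fastforce
  with True have "(l, h) \<in> set (gaps (lo k) (hi k) js)"
    by (simp add: gap_piece_def nth_default_def) (metis nth_mem)
  hence "lo k \<le> l" "h \<le> hi k" using gaps_bounds by blast+
  hence "max 0 (h - l) \<le> hi k - lo k" using assms by (intro max.boundedI diff_mono) simp_all
  thus ?thesis by (simp add: lh piece_length_def)
qed (use assms piece_length_gap_piece_beyond in simp)

lemma sum_fam_gap_piece_row:
  "summable_fam UNIV (\<lambda>i. piece_length (gap_piece lo hi js (k, i)))"
  "sum_fam UNIV (\<lambda>i. piece_length (gap_piece lo hi js (k, i))) = total_length (gaps (lo k) (hi k) js)"
proof -
  let ?P = "gaps (lo k) (hi k) js"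
  have "summable_fam UNIV (\<lambda>i. piece_length (gap_piece lo hi js (k, i)))
    \<and> sum_fam UNIV (\<lambda>i. piece_length (gap_piece lo hi js (k, i)))
      = (\<Sum>i<length ?P. piece_length (gap_piece lo hi js (k, i)))"
    using sum_fam_finite_support[of "{..<length ?P}"] piece_length_gap_piece_beyond by simp
  moreover have "(\<Sum>i<length ?P. piece_length (gap_piece lo hi js (k, i))) = total_length ?P"
    by (simp add: total_length_def sum_list_sum_nth atLeast0LessThan gap_piece_def nth_default_def)
  ultimately show "summable_fam UNIV (\<lambda>i. piece_length (gap_piece lo hi js (k, i)))"
    "sum_fam UNIV (\<lambda>i. piece_length (gap_piece lo hi js (k, i))) = total_length ?P"
    by simp_all
qed

lemma summable_fam_gap_pieces:
  fixes lo hi :: "nat \<Rightarrow> lc"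
  assumes lo_le_hi: "\<And>k. lo k \<le> hi k" and "summable_fam UNIV (\<lambda>k. hi k - lo k)"
  shows "summable_fam UNIV (piece_length \<circ> gap_piece lo hi js)"
proof -
  have "nonvanishing p (piece_length \<circ> gap_piece lo hi js) UNIV
      \<subseteq> Sigma (nonvanishing p (\<lambda>k. hi k - lo k) UNIV) (\<lambda>k. {..<length (gaps (lo k) (hi k) js)})" for p
  proof
    fix ki assume ki: "ki \<in> nonvanishing p (piece_length \<circ> gap_piece lo hi js) UNIV"
    obtain k i where ki_eq: "ki = (k, i)" by fastforce
    from ki have nv: "\<not> vanishes_upto p (piece_length (gap_piece lo hi js (k, i)))"
      by (simp add: nonvanishing_def ki_eq)
    hence "i < length (gaps (lo k) (hi k) js)"
      using piece_length_gap_piece_beyond by (metis not_le vanishes_upto_zero)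
    moreover have "\<not> vanishes_upto p (hi k - lo k)"
      using nv vanishes_upto_le[OF _ piece_length_gap_piece_le[where lo=lo and hi=hi and k=k, OF lo_le_hi[of k], of js i]]
      by (auto simp: piece_length_def)
    ultimately show "ki \<in> Sigma (nonvanishing p (\<lambda>k. hi k - lo k) UNIV)
        (\<lambda>k. {..<length (gaps (lo k) (hi k) js)})"
      by (simp add: nonvanishing_def ki_eq)
  qed
  moreover have "finite (Sigma (nonvanishing p (\<lambda>k. hi k - lo k) UNIV)
      (\<lambda>k. {..<length (gaps (lo k) (hi k) js)}))" for p
    using assms(2) by (intro finite_SigmaI finite_lessThan finite_nonvanishing)
  ultimately show "summable_fam UNIV (piece_length \<circ> gap_piece lo hi js)"
    unfolding summable_fam_def using finite_subset by blast
qed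

lemma cover_lengths_gaps:
  fixes lo hi :: "nat \<Rightarrow> lc" and d :: "nat \<times> nat \<Rightarrow> lc"
  assumes Y: "is_cover Y lo hi" and "Z \<subseteq> Y"
    and avoid: "\<And>z. Rep_lc z \<in> Z \<Longrightarrow> \<forall>(a, b)\<in>set js. \<not> (a < z \<and> z < b)"
    and d: "\<And>i. 0 < d i" "summable_fam UNIV d"
  shows "summable_fam UNIV (piece_length \<circ> gap_piece lo hi js)"
    "sum_fam UNIV (piece_length \<circ> gap_piece lo hi js) + sum_fam UNIV (\<lambda>i. d i + d i)
      \<in> cover_lengths Z"
proof -
  have sf: "summable_fam UNIV (piece_length \<circ> gap_piece lo hi js)"
    using Y by (intro summable_fam_gap_pieces) (simp_all add: is_cover_def less_imp_le)
  thus "summable_fam UNIV (piece_length \<circ> gap_piece lo hi js)" .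
  have "Z \<subseteq> (\<Union>i. Rep_lc ` {fst (gap_piece lo hi js i)..fst (gap_piece lo hi js i) + piece_length (gap_piece lo hi js i)})"
  proof
    fix x assume "x \<in> Z"
    then obtain k where "x \<in> Rep_lc ` {lo k..hi k}"
      using \<open>Z \<subseteq> Y\<close> Y unfolding is_cover_def by blast
    then obtain z where z: "x = Rep_lc z" "lo k \<le> z" "z \<le> hi k" by auto
    obtain l h where lh: "(l, h) \<in> set (gaps (lo k) (hi k) js)" "l \<le> z" "z \<le> h"
      using gaps_cover[OF z(2,3) avoid] \<open>x \<in> Z\<close> z(1) by blast
    then obtain i where "i < length (gaps (lo k) (hi k) js)" "gaps (lo k) (hi k) js ! i = (l, h)"
      by (auto simp: in_set_conv_nth)
    hence i: "gap_piece lo hi js (k, i) = (l, h)" by (simp add: gap_piece_def nth_default_def)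
    have "z \<le> l + piece_length (l, h)" using lh by (simp add: piece_length_def)
    hence "z \<in> {fst (gap_piece lo hi js (k, i))..fst (gap_piece lo hi js (k, i)) + piece_length (gap_piece lo hi js (k, i))}"
      using i lh by simp
    thus "x \<in> (\<Union>i. Rep_lc ` {fst (gap_piece lo hi js i)..fst (gap_piece lo hi js i) + piece_length (gap_piece lo hi js i)})"
      using z(1) by blast
  qed
  thus "sum_fam UNIV (piece_length \<circ> gap_piece lo hi js) + sum_fam UNIV (\<lambda>i. d i + d i)
      \<in> cover_lengths Z"
    using fattened_cover_lengths[OF bij_prod_decode _ _ sf d] by (simp add: piece_length_def comp_def)
qed

lemma overlaps_and_gaps_le:
  fixes a b lo hi :: "nat \<Rightarrow> lc"
  assumes ab: "\<And>n. a n < b n" "nonoverlapping a b" "summable_fam UNIV (\<lambda>n. b n - a n)"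
    and Y: "is_cover Y lo hi"
    and tail: "\<And>n. N \<le> n \<Longrightarrow> vanishes_upto q (b n - a n)"
  obtains w where "vanishes_upto q w"
    "sum_fam UNIV (\<lambda>(k, n). overlap (lo k) (hi k) (a n) (b n))
      + sum_fam UNIV (piece_length \<circ> gap_piece lo hi (map (\<lambda>n. (a n, b n)) [0..<N]))
      \<le> sum_fam UNIV (\<lambda>k. hi k - lo k) + w"
proof -
  define ov where "ov = (\<lambda>(k, n). overlap (lo k) (hi k) (a n) (b n))"
  define pl where "pl = piece_length \<circ> gap_piece lo hi (map (\<lambda>n. (a n, b n)) [0..<N])"
  define E where "E k = sum_fam UNIV (\<lambda>n. if N \<le> n then ov (k, n) else 0)" for k
  have a_le_b: "a n \<le> b n" for n using ab(1) less_imp_le by blast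
  have lo_le_hi: "lo k \<le> hi k" for k using Y by (simp add: is_cover_def less_imp_le)
  have sov: "summable_fam UNIV ov" unfolding ov_def
    using Y by (intro summable_fam_overlaps a_le_b lo_le_hi ab(3)) (simp add: is_cover_def)
  have spl: "summable_fam UNIV pl"
    unfolding pl_def using Y by (intro summable_fam_gap_pieces lo_le_hi) (simp add: is_cover_def)
  have row: "sum_fam UNIV (\<lambda>n. ov (k, n)) + sum_fam UNIV (\<lambda>i. pl (k, i)) \<le> (hi k - lo k) + E k" for k
  proof -
    have "total_length (gaps (lo k) (hi k) (map (\<lambda>n. (a n, b n)) [0..<N])) + (\<Sum>n<N. ov (k, n))
        \<le> hi k - lo k"
      using gaps_total_length[OF a_le_b ab(2), of "[0..<N]" "lo k" "hi k"] lo_le_hi[of k]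
      by (simp add: ov_def atLeast0LessThan max_def)
    moreover have "sum_fam UNIV (\<lambda>i. pl (k, i)) = total_length (gaps (lo k) (hi k) (map (\<lambda>n. (a n, b n)) [0..<N]))"
      unfolding pl_def comp_def by (rule sum_fam_gap_piece_row)
    moreover have "sum_fam UNIV (\<lambda>n. ov (k, n)) = (\<Sum>n<N. ov (k, n)) + E k"
      unfolding E_def by (rule sum_fam_split_at(2)[OF summable_fam_Sigma[OF sov, of k]])
    ultimately show ?thesis using add_right_mono by (simp add: algebra_simps)
  qed
  have sE: "summable_fam UNIV E"
  proof (rule summable_fam_comparison[OF _ summable_fam_row_sums[OF sov]])
    fix k
    have st: "summable_fam UNIV (\<lambda>n. if N \<le> n then ov (k, n) else 0)"
      by (rule sum_fam_split_at(1)[OF summable_fam_Sigma[OF sov]])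
    have "0 \<le> E k"
      using sum_le_sum_fam[OF st _ finite.emptyI] by (simp add: E_def ov_def overlap_nonneg)
    moreover have "E k \<le> sum_fam UNIV (\<lambda>n. ov (k, n))"
      unfolding E_def by (rule sum_fam_mono[OF st summable_fam_Sigma[OF sov]]) (simp add: ov_def overlap_nonneg)
    ultimately show "0 \<le> E k \<and> E k \<le> sum_fam UNIV (\<lambda>n. ov (k, n))" ..
  qed
  have "vanishes_upto q (E k)" for k
  proof -
    have "vanishes_upto q (ov (k, n))" if "N \<le> n" for n
      using vanishes_upto_le[OF _ overlap_le_length[OF a_le_b] tail[OF that]]
      by (simp add: ov_def overlap_nonneg)
    thus ?thesis unfolding E_def
      by (intro vanishes_upto_sum_fam sum_fam_split_at(1)[OF summable_fam_Sigma[OF sov]]) simp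
  qed
  hence vE: "vanishes_upto q (sum_fam UNIV E)" by (intro vanishes_upto_sum_fam[OF sE])
  have "sum_fam UNIV ov + sum_fam UNIV pl
      = sum_fam UNIV (\<lambda>k. sum_fam UNIV (\<lambda>n. ov (k, n)) + sum_fam UNIV (\<lambda>i. pl (k, i)))"
    using sum_fam_Sigma[OF sov] sum_fam_Sigma[OF spl]
      sum_fam_add[OF summable_fam_row_sums[OF sov] summable_fam_row_sums[OF spl]] by simp
  also have "\<dots> \<le> sum_fam UNIV (\<lambda>k. (hi k - lo k) + E k)"
    using Y sE by (intro sum_fam_mono summable_fam_add summable_fam_row_sums sov spl row)
      (simp_all add: is_cover_def)
  also have "\<dots> = sum_fam UNIV (\<lambda>k. hi k - lo k) + sum_fam UNIV E"
    using Y sE by (intro sum_fam_add) (simp_all add: is_cover_def)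
  finally show ?thesis using that[OF vE] by (simp add: ov_def pl_def)
qed

section \<open>Disjoint unions of intervals\<close>

lemma is_infimum_approx:
  assumes "is_infimum T M" "0 < e"
  obtains y where "y \<in> T" "y < M + e"
proof -
  have "\<not> (\<forall>y\<in>T. M + e \<le> y)"
  proof
    assume "\<forall>y\<in>T. M + e \<le> y"
    hence "M + e \<le> M" using assms(1) unfolding is_infimum_def by blast
    thus False using assms(2) by simp
  qed
  thus ?thesis using that by (auto simp: not_le)
qed

locale disjoint_interval_union =
  fixes A :: "(rat \<Rightarrow> real) set" and a b :: "nat \<Rightarrow> lc"
  assumes a_less_b: "\<And>n. a n < b n"
    and nonoverlapping: "nonoverlapping a b"
    and summable_lengths: "summable_fam UNIV (\<lambda>n. b n - a n)"
    and inner: "\<And>n. Rep_lc ` {a n<..<b n} \<subseteq> A"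
    and outer: "A \<subseteq> (\<Union>n. Rep_lc ` {a n..b n})"
begin

lemma is_cover_union: "is_cover A a b"
  using a_less_b outer summable_lengths by (simp add: is_cover_def)

lemma is_infimum_cover_lengths: "is_infimum (cover_lengths A) (sum_fam UNIV (\<lambda>n. b n - a n))"
proof -
  have mem: "sum_fam UNIV (\<lambda>n. b n - a n) \<in> cover_lengths A"
    using is_cover_union unfolding cover_lengths_def by blast
  moreover have
"sum_fam UNIV (\<lambda>n. b n - a n) \<le> y" if y: "y \<in> cover_lengths A" for y
  proof (rule le_by_vanishing)
    fix q
    obtain lo hi :: "nat \<Rightarrow> lc" where c: "is_cover A lo hi" and y: "y = sum_fam UNIV (\<lambda>k. hi k - lo k)"
      using y by (auto simp: cover_lengths_def)
    obtain N where N: "\<And>n. n \<ge> N \<Longrightarrow>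
        vanishes_upto q (sum (\<lambda>n. b n - a n) {..<n} - sum_fam UNIV (\<lambda>n. b n - a n))"
      using partial_sums_approx_sum_fam[OF summable_lengths] by blast
    have "\<exists>k. lo k \<le> x \<and> x \<le> hi k" if "a n < x" "x < b n" for n x
    proof -
      have "Rep_lc x \<in> A" using inner[of n] that by auto
      then obtain k where "Rep_lc x \<in> Rep_lc ` {lo k..hi k}" using c unfolding is_cover_def by blast
      thus ?thesis by (auto simp: Rep_lc_inject)
    qed
    hence "(\<Sum>n<N. b n - a n) \<le> y"
      unfolding y using c a_less_b nonoverlapping
      by (intro sum_lengths_le_cover_length) (auto simp: is_cover_def)
    moreover have "vanishes_upto q (sum_fam UNIV (\<lambda>n. b n - a n) - (\<Sum>n<N. b n - a n))"
      using N[of N] by (metis minus_diff_eq order_refl vanishes_upto_uminus_iff)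
    ultimately show "\<exists>w. vanishes_upto q w \<and> sum_fam UNIV (\<lambda>n. b n - a n) \<le> y + w"
      by (intro exI[of _ "sum_fam UNIV (\<lambda>n. b n - a n) - (\<Sum>n<N. b n - a n)"]) (simp add: algebra_simps)
  qed
  ultimately show ?thesis unfolding is_infimum_def by blast
qed

text \<open>A cover of \<open>B\<close> is split, up to slack that vanishes to order \<open>q\<close>, into the parts inside
  the intervals and the gaps left by the finitely many intervals whose lengths do not vanish
  to order \<open>q\<close>.\<close>

lemma split_cover_lengths:
  fixes lo hi :: "nat \<Rightarrow> lc"
  assumes "is_cover B lo hi"
  obtains x1 x2 w where "x1 \<in> cover_lengths (A \<inter> B)" "x2 \<in> cover_lengths ((LC - A) \<inter> B)"
    "vanishes_upto q w" "x1 + x2 \<le> sum_fam UNIV (\<lambda>k. hi k - lo k) + w"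
proof -
  obtain N where N: "\<And>n. N \<le> n \<Longrightarrow> vanishes_upto q (b n - a n)"
    using summable_lengths unfolding summable_fam_nat_iff by blast
  obtain d :: "nat \<times> nat \<Rightarrow> lc" where d: "\<And>i. 0 < d i" "\<And>i. vanishes_upto q (d i)" "summable_fam UNIV d"
    using slack_family by blast
  define js where "js = map (\<lambda>n. (a n, b n)) [0..<N]"
  have x1: "sum_fam UNIV (\<lambda>(k, n). overlap (lo k) (hi k) (a n) (b n)) + sum_fam UNIV (\<lambda>i. d i + d i)
      \<in> cover_lengths (A \<inter> B)"
    using cover_lengths_Int(2)[OF is_cover_union assms d(1,3)] .
  have "\<not> (a n < z \<and> z < b n)" if "Rep_lc z \<notin> A" for z n
  proof
    assume "a n < z \<and> z < b n"
    hence "Rep_lc z \<in> Rep_lc ` {a n<..<b n}" by simp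
    thus False using inner[of n] that by blast
  qed
  hence "\<forall>(a', b')\<in>set js. \<not> (a' < z \<and> z < b')" if "Rep_lc z \<in> (LC - A) \<inter> B" for z
    using that by (auto simp: js_def)
  hence x2: "sum_fam UNIV (piece_length \<circ> gap_piece lo hi js) + sum_fam UNIV (\<lambda>i. d i + d i)
      \<in> cover_lengths ((LC - A) \<inter> B)"
    by (intro cover_lengths_gaps(2)[OF assms _ _ d(1,3)]) auto
  obtain w where w: "vanishes_upto q w"
    "sum_fam UNIV (\<lambda>(k, n). overlap (lo k) (hi k) (a n) (b n)) + sum_fam UNIV (piece_length \<circ> gap_piece lo hi js)
      \<le> sum_fam UNIV (\<lambda>k. hi k - lo k) + w"
    unfolding js_def by (rule overlaps_and_gaps_le[OF a_less_b nonoverlapping summable_lengths assms N])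
  have "vanishes_upto q (sum_fam UNIV (\<lambda>i. d i + d i))"
    using d by (intro vanishes_upto_sum_fam summable_fam_add vanishes_upto_add)
  hence "vanishes_upto q (w + (sum_fam UNIV (\<lambda>i. d i + d i) + sum_fam UNIV (\<lambda>i. d i + d i)))"
    using w(1) by (intro vanishes_upto_add)
  moreover have "(sum_fam UNIV (\<lambda>(k, n). overlap (lo k) (hi k) (a n) (b n)) + sum_fam UNIV (\<lambda>i. d i + d i))
      + (sum_fam UNIV (piece_length \<circ> gap_piece lo hi js) + sum_fam UNIV (\<lambda>i. d i + d i))
      \<le> sum_fam UNIV (\<lambda>k. hi k - lo k) + (w + (sum_fam UNIV (\<lambda>i. d i + d i) + sum_fam UNIV (\<lambda>i. d i + d i)))"
    using w(2) by (simp add: algebra_simps)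
  ultimately show ?thesis using that x1 x2 by blast
qed

lemma cover_lengths_split_approx:
  assumes "is_infimum (cover_lengths B) M"
  shows "\<exists>x1\<in>cover_lengths (A \<inter> B). \<exists>x2\<in>cover_lengths ((LC - A) \<inter> B).
    \<exists>w. vanishes_upto q w \<and> x1 + x2 \<le> M + w"
proof -
  have "0 < monomial (q + 1) 1" by (simp add: monomial_pos)
  then obtain y where "y \<in> cover_lengths B" "y < M + monomial (q + 1) 1"
    using is_infimum_approx[OF assms] by blast
  then obtain lo hi :: "nat \<Rightarrow> lc" where c: "is_cover B lo hi"
    and y: "sum_fam UNIV (\<lambda>k. hi k - lo k) < M + monomial (q + 1) 1"
    by (auto simp: cover_lengths_def)
  obtain x1 x2 w where x: "x1 \<in> cover_lengths (A \<inter> B)" "x2 \<in> cover_lengths ((LC - A) \<inter> B)"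
    "vanishes_upto q w" "x1 + x2 \<le> sum_fam UNIV (\<lambda>k. hi k - lo k) + w"
    using split_cover_lengths[OF c] .
  have "x1 + x2 \<le> sum_fam UNIV (\<lambda>k. hi k - lo k) + w" by (rule x(4))
  also have "\<dots> \<le> M + monomial (q + 1) 1 + w" using less_imp_le[OF y] by simp
  finally have "x1 + x2 \<le> M + (monomial (q + 1) 1 + w)" by (simp add: algebra_simps)
  moreover have "vanishes_upto q (monomial (q + 1) 1 + w)"
    by (intro vanishes_upto_add vanishes_upto_monomial x(3)) simp
  ultimately show ?thesis using x(1,2) by blast
qed

lemma caratheodory:
  assumes "outer_measurable B"
  shows "outer_measurable (A \<inter> B) \<and> outer_measurable ((LC - A) \<inter> B) \<and>
    outer_measure B = outer_measure (A \<inter> B) + outer_measure ((LC - A) \<inter> B)"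
proof -
  obtain M where "B \<subseteq> LC" and M: "is_infimum (cover_lengths B) M"
    using assms by (auto simp: outer_measurable_iff)
  have lower: "M \<le> x1 + x2"
    if "x1 \<in> cover_lengths (A \<inter> B)" "x2 \<in> cover_lengths ((LC - A) \<inter> B)" for x1 x2
  proof -
    have "x1 + x2 \<in> cover_lengths B"
      using cover_lengths_Un[OF that] \<open>B \<subseteq> LC\<close> by blast
    thus ?thesis using M by (simp add: is_infimum_def)
  qed
  obtain m1 m2 where m: "is_infimum (cover_lengths (A \<inter> B)) m1"
    "is_infimum (cover_lengths ((LC - A) \<inter> B)) m2" "M = m1 + m2"
    by (rule is_infimum_split[OF lower cover_lengths_split_approx[OF M]])
  have "A \<inter> B \<subseteq> LC" "(LC - A) \<inter> B \<subseteq> LC" using \<open>B \<subseteq> LC\<close> by blast+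
  hence "outer_measurable (A \<inter> B)" "outer_measurable ((LC - A) \<inter> B)"
    using m(1,2) unfolding outer_measurable_iff by blast+
  moreover have "outer_measure B = outer_measure (A \<inter> B) + outer_measure ((LC - A) \<inter> B)"
    by (simp add: outer_measure_eq[OF M] outer_measure_eq[OF m(1)] outer_measure_eq[OF m(2)] m(3) Rep_lc_add)
  ultimately show ?thesis by blast
qed

lemma L_measurable: "L_measurable A"
proof -
  have "A \<subseteq> LC" unfolding LC_eq_range_Rep_lc using outer by blast
  hence "outer_measurable A" using is_infimum_cover_lengths unfolding outer_measurable_iff by blast
  thus ?thesis unfolding L_measurable_def using caratheodory by blast
qed

lemma L_measure: "L_measure A = Rep_lc (sum_fam UNIV (\<lambda>n. b n - a n))"
  unfolding L_measure_def by (rule outer_measure_eq[OF is_infimum_cover_lengths])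

end

lemma summable_fam_iff_lc_tendsto_zero:
  "summable_fam UNIV f \<longleftrightarrow> lc_tendsto (\<lambda>n. Rep_lc (f n)) 0"
proof -
  have zero: "0 = Rep_lc l \<longleftrightarrow> l = 0" for l by (metis Rep_lc_inject Rep_lc_zero)
  show ?thesis unfolding lc_tendsto_Rep_iff summable_fam_nat_iff
  proof
    assume "\<forall>q. \<exists>N. \<forall>n\<ge>N. vanishes_upto q (f n)"
    thus "\<exists>l. 0 = Rep_lc l \<and> (\<forall>q. \<exists>N. \<forall>n\<ge>N. vanishes_upto q (f n - l))"
      by (intro exI[of _ 0]) (simp add: Rep_lc_zero)
  next
    assume "\<exists>l. 0 = Rep_lc l \<and> (\<forall>q. \<exists>N. \<forall>n\<ge>N. vanishes_upto q (f n - l))"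
    thus "\<forall>q. \<exists>N. \<forall>n\<ge>N. vanishes_upto q (f n)" using zero by force
  qed
qed

lemma disjoint_lc_intervals_Rep:
  assumes "\<And>n. is_lc_interval (J n)" "\<And>m n. m \<noteq> n \<Longrightarrow> J m \<inter> J n = {}"
  obtains a b :: "nat \<Rightarrow> lc" where "\<And>n. a n < b n" "nonoverlapping a b"
    "\<And>n. Rep_lc ` {a n<..<b n} \<subseteq> J n" "\<And>n. J n \<subseteq> Rep_lc ` {a n..b n}"
    "\<And>n. lc_length (J n) = Rep_lc (b n - a n)"
proof -
  have "\<forall>n. \<exists>ab. fst ab < snd ab \<and> Rep_lc ` {fst ab<..<snd ab} \<subseteq> J n \<and>
      J n \<subseteq> Rep_lc ` {fst ab..snd ab} \<and> lc_length (J n) = Rep_lc (snd ab - fst ab)"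
    using is_lc_interval_Rep[OF assms(1)] by (metis fst_conv snd_conv)
  then obtain ab where ab: "\<And>n. fst (ab n) < snd (ab n)"
    "\<And>n. Rep_lc ` {fst (ab n)<..<snd (ab n)} \<subseteq> J n" "\<And>n. J n \<subseteq> Rep_lc ` {fst (ab n)..snd (ab n)}"
    "\<And>n. lc_length (J n) = Rep_lc (snd (ab n) - fst (ab n))"
    by metis
  define a where "a n = fst (ab n)" for n
  define b where "b n = snd (ab n)" for n
  have "b n \<le> a m \<or> b m \<le> a n" if "n \<noteq> m" for n m
  proof (rule ccontr)
    assume "\<not> ?thesis"
    hence "max (a n) (a m) < min (b n) (b m)"
      using ab(1)[of n] ab(1)[of m] by (auto simp: a_def b_def)
    then obtain z where "max (a n) (a m) < z" "z < min (b n) (b m)"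
      using dense by blast
    hence "Rep_lc z \<in> J n" "Rep_lc z \<in> J m"
      using ab(2)[of n] ab(2)[of m] by (auto simp: a_def b_def)
    thus False using assms(2)[OF that] by blast
  qed
  hence "nonoverlapping a b" by (simp add: nonoverlapping_def)
  moreover note ab[folded a_def b_def]
  ultimately show ?thesis using that by blast
qed

theorem mainTheorem14:
  fixes J :: "nat \<Rightarrow> (rat \<Rightarrow> real) set"
  assumes "\<And>n. is_lc_interval (J n)"
    and "\<And>m n. m \<noteq> n \<Longrightarrow> J m \<inter> J n = {}"
    and "lc_tendsto (\<lambda>n. lc_length (J n)) 0"
  shows "L_measurable (\<Union>n. J n) \<and> lc_sums (\<lambda>n. lc_length (J n)) (L_measure (\<Union>n. J n))"
proof -
  obtain a b :: "nat \<Rightarrow> lc" where ab: "\<And>n. a n < b n" "nonoverlapping a b"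
    "\<And>n. Rep_lc ` {a n<..<b n} \<subseteq> J n" "\<And>n. J n \<subseteq> Rep_lc ` {a n..b n}"
    and length: "\<And>n. lc_length (J n) = Rep_lc (b n - a n)"
    using disjoint_lc_intervals_Rep[of J, OF assms(1,2)] by blast
  have "lc_tendsto (\<lambda>n. Rep_lc (b n - a n)) 0" using assms(3) by (simp add: length)
  hence sf: "summable_fam UNIV (\<lambda>n. b n - a n)" by (simp add: summable_fam_iff_lc_tendsto_zero)
  interpret disjoint_interval_union "\<Union>n. J n" a b
  proof
    show "Rep_lc ` {a n<..<b n} \<subseteq> (\<Union>n. J n)" for n using ab(3)[of n] by blast
    show "(\<Union>n. J n) \<subseteq> (\<Union>n. Rep_lc ` {a n..b n})" using ab(4) by blast
  qed (use ab sf in auto)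
  have "lc_sums (\<lambda>n. lc_length (J n)) (L_measure (\<Union>n. J n))"
    unfolding length L_measure by (rule lc_sums_sum_fam[OF sf])
  thus ?thesis using L_measurable by blast
qed

end
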